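(* Let $0\le M\le N$ be integers, let $y=(y_1,\dots,y_M)$ be a half-space configuration and $(w_1,\dots,w_N)\in\mathbb{C}^N$ (generic). Then, for the half-space ASEP with $\gamma=0$, \[\sum_{y'}\langle y|\mathscr{L}|y'\rangle\,\mathcal{F}_{y'}(w_1,\dots,w_N)=\left(-\alpha+\sum_{i=1}^N\frac{(1-q)^2w_i}{(1-w_i)(1-qw_i)}\right)\mathcal{F}_y(w_1,\dots,w_N),\] the sum running over all half-space configurations $y'$.
   Context: Half-space ASEP with parameters $q>0$, $q\ne1$, $\alpha\ge0$ and exit rate $\gamma=0$: state space the finite subsets of $\mathbb{N}=\{1,2,\dots\}$, a configuration $y=(y_1,\dots,y_M)$ with $y_1>\dots>y_M\ge1$. A particle at $x$ jumps to $x+1$ at rate $1$ and to $x-1$ (if $x\ge2$) at rate $q$, only onto empty sites; a particle enters at site $1$ at rate $\alpha$ when site $1$ is empty. The generator matrix $\langle y|\mathscr{L}|y'\rangle$ equals, for $y'\neq y$, the rate of the single transition from $y$ to $y'$ (zero if there is none), and $\langle y|\mathscr{L}|y\rangle=-\sum_{y'\ne y}\langle y|\mathscr{L}|y'\rangle$. $\mathcal{B}_N$ is the group of signed permutations of $\{1,\dots,N\}$ acting by $\sigma(f(w_1,\dots,w_N))=f(w_{\sigma(1)},\dots,w_{\sigma(N)})$ with $w_{-k}:=1/(qw_k)$. With $V_k=\frac{q^{\binom{k}{2}}(1-q)^k}{\prod_{i=1}^k(1-q^i)(1+q^{i-1})}$ and $\varphi_y(w)=\frac{1-q-\alpha+\alpha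 w}{1-qw^2}\frac{(1-q)w}{1-w}\left(\frac{1-qw}{1-w}\right)^{y-1}$, for a configuration $y$ with $M\le N$ parts \[\mathcal{F}_y(w_1,\dots,w_N)=V_{N-M}\alpha^{N-M}\sum_{\sigma\in\mathcal{B}_N}\sigma\!\left(\prod_{1\le i<j\le N}\left[\frac{w_i-qw_j}{w_i-w_j}\frac{1-w_iw_j}{1-qw_iw_j}\right]\prod_{i=1}^M\varphi_{y_i}(w_i)\right),\] and $\mathcal{F}_y:=0$ if $y$ has more than $N$ parts. *)

theory Defs
  imports Complex_Main
begin

definition is_config :: "nat set \<Rightarrow> bool" where
  "is_config y \<longleftrightarrow> finite y \<and> 0 \<notin> y"

text \<open>Ordered parts y_1 > y_2 > ... > y_M (list index i-1 holds y_i).\<close>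
definition parts :: "nat set \<Rightarrow> nat list" where
  "parts y = rev (sorted_list_of_set y)"

definition rate :: "real \<Rightarrow> real \<Rightarrow> nat set \<Rightarrow> nat set \<Rightarrow> real" where
  "rate q \<alpha> y y' =
     (if \<exists>x\<in>y. x + 1 \<notin> y \<and> y' = insert (x + 1) (y - {x}) then 1 else 0)
   + (if \<exists>x\<in>y. x \<ge> 2 \<and> x - 1 \<notin> y \<and> y' = insert (x - 1) (y - {x}) then q else 0)
   + (if 1 \<notin> y \<and> y' = insert 1 y then \<alpha> else 0)"

definition gen :: "real \<Rightarrow> real \<Rightarrow> nat set \<Rightarrow> nat set \<Rightarrow> real" where
  "gen q \<alpha> y y' =
     (if y' \<noteq> y then rate q \<alpha> y y'
      else - (\<Sum>z\<in>{z. is_config z \<and> z \<noteq> y \<and> rate q \<alpha> y z \<noteq> 0}. rate q \<alpha> y z))"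

definition signed_perms :: "nat \<Rightarrow> (nat \<Rightarrow> int) set" where
  "signed_perms N = {\<sigma>. (\<forall>k. k \<notin> {1..N} \<longrightarrow> \<sigma> k = 0) \<and> (\<forall>k\<in>{1..N}. \<sigma> k \<noteq> 0)
      \<and> bij_betw (\<lambda>k. nat \<bar>\<sigma> k\<bar>) {1..N} {1..N}}"

text \<open>w_{sigma(k)} with the convention w_{-k} = 1/(q w_k).\<close>
definition wsig :: "real \<Rightarrow> (nat \<Rightarrow> complex) \<Rightarrow> (nat \<Rightarrow> int) \<Rightarrow> nat \<Rightarrow> complex" where
  "wsig q w \<sigma> k = (if \<sigma> k > 0 then w (nat (\<sigma> k)) else 1 / (of_real q * w (nat (- \<sigma> k))))"

definition Vconst :: "real \<Rightarrow> nat \<Rightarrow> real" where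
  "Vconst q k = q ^ (k choose 2) * (1 - q) ^ k / (\<Prod>i=1..k. (1 - q ^ i) * (1 + q ^ (i - 1)))"

definition phi :: "real \<Rightarrow> real \<Rightarrow> nat \<Rightarrow> complex \<Rightarrow> complex" where
  "phi q \<alpha> x z = (1 - of_real q - of_real \<alpha> + of_real \<alpha> * z) / (1 - of_real q * z ^ 2)
      * ((1 - of_real q) * z / (1 - z)) * ((1 - of_real q * z) / (1 - z)) ^ (x - 1)"

definition Ffun :: "real \<Rightarrow> real \<Rightarrow> nat \<Rightarrow> nat set \<Rightarrow> (nat \<Rightarrow> complex) \<Rightarrow> complex" where
  "Ffun q \<alpha> N y w =
     (let M = card y; ys = parts y in
      if M > N then 0 else
      of_real (Vconst q (N - M) * \<alpha> ^ (N - M)) *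
      (\<Sum>\<sigma>\<in>signed_perms N. let u = wsig q w \<sigma> in
         (\<Prod>i\<in>{1..N}. \<Prod>j\<in>{i<..N}.
            (u i - of_real q * u j) / (u i - u j) * ((1 - u i * u j) / (1 - of_real q * u i * u j)))
         * (\<Prod>i\<in>{1..M}. phi q \<alpha> (ys ! (i - 1)) (u i))))"

text \<open>Genericity: every denominator occurring in F (for every signed permutation) and in the
  eigenvalue is nonzero.  Here a, b range over w_i, w_{-i} = 1/(q w_i).\<close>
definition generic :: "real \<Rightarrow> nat \<Rightarrow> (nat \<Rightarrow> complex) \<Rightarrow> bool" where
  "generic q N w \<longleftrightarrow>
     (\<forall>i\<in>{1..N}. w i \<noteq> 0) \<and>
     (\<forall>i\<in>{1..N}. \<forall>a\<in>{w i, 1 / (of_real q * w i)}.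
        a \<noteq> 1 \<and> of_real q * a \<noteq> 1 \<and> of_real q * a ^ 2 \<noteq> 1) \<and>
     (\<forall>i\<in>{1..N}. \<forall>j\<in>{1..N}. i \<noteq> j \<longrightarrow>
        (\<forall>a\<in>{w i, 1 / (of_real q * w i)}. \<forall>b\<in>{w j, 1 / (of_real q * w j)}.
           a \<noteq> b \<and> of_real q * a * b \<noteq> 1))"

end

theory Submission
  imports Defs
begin

text \<open>
  The eigenfunction is a symmetrisation over signed permutations. Expanding it along the spectral
  variable, with its sign, carried by the largest particle gives a recursion in the number of
  particles, in which the normalisation \<open>V\<^sub>k \<alpha>\<^sup>k\<close> makes every spectral variable left without a
  particle contribute a factor \<open>\<alpha>\<close>.

  The eigenvalue equation follows by induction on the number of particles. The free motion of the
  largest particle contributes its energy, by a second order difference equation for \<open>\<phi>\<^sub>y\<close> in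
  \<open>y\<close>. When the two largest particles are adjacent, the blocked jump is compensated by a
  two-body identity which makes the collision term antisymmetric in the two spectral variables.

  The base cases and the normalisation reduce to sums over one spectral variable \<open>w\<close> of
  \<open>f(w)\<close> times the product of the two-particle factors \<open>S(w, w')\<close>, symmetrised under
  \<open>w \<mapsto> 1/(q w)\<close>. In the coordinate \<open>\<xi> = (1 - q w)/(1 - w) - (1 + q)/2\<close> these become sums of
  \<open>f(x) \<Prod>\<^sub>y (x + y)/(x - y)\<close> over the \<open>2N\<close> points \<open>x = \<xi>(w\<^sub>i), \<xi>(1/(q w\<^sub>i))\<close> (the product
  over the other points \<open>y\<close>), which partial fractions evaluate for \<open>f = 1, x, x\<^sup>2\<close> and
  \<open>1/(x \<plusminus> (1 - q)/2)\<close>.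
\<close>

section \<open>Partial fractions\<close>

definition ratio_prod :: "'a::field set \<Rightarrow> 'a \<Rightarrow> 'a" where
  "ratio_prod X z = (\<Prod>y\<in>X. (z + y) / (z - y))"

definition ratio_sum :: "'a::field set \<Rightarrow> ('a \<Rightarrow> 'a) \<Rightarrow> 'a" where
  "ratio_sum X f = (\<Sum>x\<in>X. f x * ratio_prod (X - {x}) x)"

lemma ratio_prod_insert:
  "finite X \<Longrightarrow> c \<notin> X \<Longrightarrow> ratio_prod (insert c X) z = (z + c) / (z - c) * ratio_prod X z"
  unfolding ratio_prod_def by simp

lemma ratio_prod_insert_remove:
  assumes "finite X" "c \<notin> X" "x \<in> X"
  shows "ratio_prod (insert c X - {x}) x = (x + c) / (x - c) * ratio_prod (X - {x}) x"
proof -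
  have "insert c X - {x} = insert c (X - {x})" using assms by auto
  then show ?thesis using assms by (simp add: ratio_prod_insert)
qed

lemma ratio_prod_partial_fractions:
  fixes X :: "'a::field_char_0 set"
  assumes "finite X" "z \<notin> X"
  shows "ratio_prod X z = 1 + (\<Sum>x\<in>X. 2 * x * ratio_prod (X - {x}) x / (z - x))"
  using assms
proof (induction X arbitrary: z rule: finite_induct)
  case empty
  then show ?case by (simp add: ratio_prod_def)
next
  case (insert c X)
  let ?R = "\<lambda>x. ratio_prod (X - {x}) x"
  have zc: "z \<noteq> c" and zX: "z \<notin> X" using insert by auto
  have IHz: "ratio_prod X z = 1 + (\<Sum>x\<in>X. 2 * x * ?R x / (z - x))" using insert zX by blast
  have IHc: "ratio_prod X c = 1 + (\<Sum>x\<in>X. 2 * x * ?R x / (c - x))" using insert by blast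
  have "(\<Sum>x\<in>insert c X. 2 * x * ratio_prod (insert c X - {x}) x / (z - x))
      = 2 * c * ratio_prod X c / (z - c) + (\<Sum>x\<in>X. 2 * x * ((x + c) / (x - c) * ?R x) / (z - x))"
    using insert by (simp add: ratio_prod_insert_remove)
  also have "(\<Sum>x\<in>X. 2 * x * ((x + c) / (x - c) * ?R x) / (z - x))
      = (\<Sum>x\<in>X. (z + c) / (z - c) * (2 * x * ?R x / (z - x)) - 2 * c / (z - c) * (2 * x * ?R x / (c - x)))"
  proof (rule sum.cong[OF refl])
    fix x assume "x \<in> X"
    then have "x \<noteq> c" "z \<noteq> x" using insert zX by auto
    then show "2 * x * ((x + c) / (x - c) * ?R x) / (z - x)
      = (z + c) / (z - c) * (2 * x * ?R x / (z - x)) - 2 * c / (z - c) * (2 * x * ?R x / (c - x))"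
      using zc by (simp add: divide_simps) (simp add: algebra_simps)
  qed
  also have "\<dots> = (z + c) / (z - c) * (ratio_prod X z - 1) - 2 * c / (z - c) * (ratio_prod X c - 1)"
    by (simp add: sum_subtractf sum_distrib_left IHz IHc)
  finally show ?case
    using insert zc by (simp add: ratio_prod_insert divide_simps) (simp add: algebra_simps)
qed

lemma sum_partial_fractions:
  fixes X :: "'a::field_char_0 set"
  assumes "finite X" "c \<notin> X"
  shows "(\<Sum>x\<in>X. 2 * x * ratio_prod (X - {x}) x / (x - c)) = 1 - ratio_prod X c"
proof -
  have "(\<Sum>x\<in>X. 2 * x * ratio_prod (X - {x}) x / (x - c))
      = - (\<Sum>x\<in>X. 2 * x * ratio_prod (X - {x}) x / (c - x))"
    by (simp add: sum_negf[symmetric] minus_divide_right)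
  then show ?thesis using ratio_prod_partial_fractions[OF assms] by simp
qed

lemma ratio_sum_add: "ratio_sum X (\<lambda>x. f x + g x) = ratio_sum X f + ratio_sum X g"
  unfolding ratio_sum_def by (simp add: algebra_simps sum.distrib)

lemma ratio_sum_cmult: "ratio_sum X (\<lambda>x. c * f x) = c * ratio_sum X f"
  unfolding ratio_sum_def by (simp add: algebra_simps sum_distrib_left)

lemma ratio_sum_const: "ratio_sum X (\<lambda>_. c) = c * ratio_sum X (\<lambda>_. 1)"
  using ratio_sum_cmult[of X c "\<lambda>_. 1"] by simp

lemma ratio_sum_zero [simp]: "ratio_sum X (\<lambda>_. 0) = 0"
  unfolding ratio_sum_def by simp

lemma ratio_sum_pole:
  fixes X :: "'a::field_char_0 set"
  assumes "finite X" "d \<notin> X"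
  shows "2 * d * ratio_sum X (\<lambda>x. 1 / (x - d)) = 1 - ratio_prod X d - 2 * ratio_sum X (\<lambda>_. 1)"
proof -
  have "(\<Sum>x\<in>X. 2 * x * ratio_prod (X - {x}) x / (x - d))
      = (\<Sum>x\<in>X. 2 * ratio_prod (X - {x}) x + 2 * d * (1 / (x - d) * ratio_prod (X - {x}) x))"
  proof (rule sum.cong[OF refl])
    fix x assume "x \<in> X"
    then have "x - d \<noteq> 0" using assms by auto
    then show "2 * x * ratio_prod (X - {x}) x / (x - d)
      = 2 * ratio_prod (X - {x}) x + 2 * d * (1 / (x - d) * ratio_prod (X - {x}) x)"
      by (simp add: divide_simps) (simp add: algebra_simps)
  qed
  also have "\<dots> = 2 * ratio_sum X (\<lambda>_. 1) + 2 * d * ratio_sum X (\<lambda>x. 1 / (x - d))"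
    by (simp add: sum.distrib sum_distrib_left ratio_sum_def)
  finally show ?thesis using sum_partial_fractions[OF assms] by simp
qed

text \<open>Split \<open>(x + c) / (x - c) = 1 + 2 c / (x - c)\<close> and sum the polar part by the
  partial fraction expansion.\<close>

lemma ratio_sum_insert:
  fixes X :: "'a::field_char_0 set"
  assumes "finite X" "c \<notin> X"
  shows "ratio_sum (insert c X) f = ratio_sum X f + f c * (1 - 2 * ratio_sum X (\<lambda>_. 1))
    + 2 * c * ratio_sum X (\<lambda>x. (f x - f c) / (x - c))"
proof -
  have "ratio_sum (insert c X) f
      = f c * ratio_prod X c + (\<Sum>x\<in>X. f x * ((x + c) / (x - c)) * ratio_prod (X - {x}) x)"
    using assms by (simp add: ratio_sum_def ratio_prod_insert_remove mult.assoc)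
  also have "(\<Sum>x\<in>X. f x * ((x + c) / (x - c)) * ratio_prod (X - {x}) x)
      = (\<Sum>x\<in>X. f x * ratio_prod (X - {x}) x
          + 2 * c * ((f x - f c) / (x - c) * ratio_prod (X - {x}) x)
          + f c * (2 * c * (1 / (x - c) * ratio_prod (X - {x}) x)))"
  proof (rule sum.cong[OF refl])
    fix x assume "x \<in> X"
    then have "x - c \<noteq> 0" using assms by auto
    then show "f x * ((x + c) / (x - c)) * ratio_prod (X - {x}) x
      = f x * ratio_prod (X - {x}) x + 2 * c * ((f x - f c) / (x - c) * ratio_prod (X - {x}) x)
          + f c * (2 * c * (1 / (x - c) * ratio_prod (X - {x}) x))"
      by (simp add: divide_simps) (simp add: algebra_simps)
  qed
  also have "\<dots> = ratio_sum X f + 2 * c * ratio_sum X (\<lambda>x. (f x - f c) / (x - c))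
      + f c * (2 * c * ratio_sum X (\<lambda>x. 1 / (x - c)))"
    by (simp add: sum.distrib sum_distrib_left ratio_sum_def)
  also have "2 * c * ratio_sum X (\<lambda>x. 1 / (x - c)) = 1 - ratio_prod X c - 2 * ratio_sum X (\<lambda>_. 1)"
    by (rule ratio_sum_pole[OF assms])
  finally show ?thesis by (simp add: algebra_simps)
qed

lemma ratio_sum_one:
  fixes X :: "'a::field_char_0 set"
  assumes "finite X"
  shows "ratio_sum X (\<lambda>_. 1) = (if even (card X) then 0 else 1)"
  using assms
proof (induction X rule: finite_induct)
  case empty
  then show ?case by (simp add: ratio_sum_def)
next
  case (insert c X)
  then show ?case by (simp add: ratio_sum_insert)
qed

lemma ratio_sum_id:
  fixes X :: "'a::field_char_0 set"
  assumes "finite X"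
  shows "ratio_sum X (\<lambda>x. x) = (\<Sum>x\<in>X. x)"
  using assms
proof (induction X rule: finite_induct)
  case empty
  then show ?case by (simp add: ratio_sum_def)
next
  case (insert c X)
  have "ratio_sum X (\<lambda>x. (x - c) / (x - c)) = ratio_sum X (\<lambda>_. 1)"
    unfolding ratio_sum_def by (rule sum.cong) (use insert in auto)
  then show ?case using insert by (simp add: ratio_sum_insert algebra_simps)
qed

lemma ratio_sum_square:
  fixes X :: "'a::field_char_0 set"
  assumes "finite X"
  shows "ratio_sum X (\<lambda>x. x ^ 2) = (\<Sum>x\<in>X. x) ^ 2"
  using assms
proof (induction X rule: finite_induct)
  case empty
  then show ?case by (simp add: ratio_sum_def)
next
  case (insert c X)
  have "ratio_sum X (\<lambda>x. (x ^ 2 - c ^ 2) / (x - c)) = ratio_sum X (\<lambda>x. x + c)"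
    unfolding ratio_sum_def
  proof (rule sum.cong[OF refl])
    fix x assume "x \<in> X"
    then have "x - c \<noteq> 0" using insert by auto
    then show "(x ^ 2 - c ^ 2) / (x - c) * ratio_prod (X - {x}) x
      = (x + c) * ratio_prod (X - {x}) x"
      by (simp add: divide_simps power2_eq_square) (simp add: algebra_simps)
  qed
  also have "\<dots> = (\<Sum>x\<in>X. x) + c * ratio_sum X (\<lambda>_. 1)"
    using ratio_sum_add[of X "\<lambda>x. x" "\<lambda>_. c"] ratio_sum_const[of X c] ratio_sum_id[OF insert(1)]
    by simp
  finally show ?case
    using insert by (simp add: ratio_sum_insert power2_eq_square algebra_simps)
qed

section \<open>Spectral variables\<close>

text \<open>In the paper's notation: \<open>qinv Q w\<^sub>k = w\<^sub>-\<^sub>k\<close>, \<open>scatt\<close> is the two-particle factor of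
  \<open>F\<^sub>y\<close>, \<open>step_factor Q w = \<phi>\<^sub>y\<^sub>+\<^sub>1(w) / \<phi>\<^sub>y(w)\<close>, and \<open>energy\<close> gives the summands of the eigenvalue.\<close>

definition qinv :: "'a::field \<Rightarrow> 'a \<Rightarrow> 'a" where
  "qinv Q z = 1 / (Q * z)"

definition step_factor :: "'a::field \<Rightarrow> 'a \<Rightarrow> 'a" where
  "step_factor Q v = (1 - Q * v) / (1 - v)"

definition xi :: "'a::field \<Rightarrow> 'a \<Rightarrow> 'a" where
  "xi Q v = step_factor Q v - (1 + Q) / 2"

definition scatt :: "'a::field \<Rightarrow> 'a \<Rightarrow> 'a \<Rightarrow> 'a" where
  "scatt Q a b = (a - Q * b) / (a - b) * ((1 - a * b) / (1 - Q * a * b))"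

definition scatt_prod :: "'a::field \<Rightarrow> 'a \<Rightarrow> 'a set \<Rightarrow> 'a" where
  "scatt_prod Q v U = (\<Prod>u\<in>U. scatt Q v u)"

definition energy :: "'a::field \<Rightarrow> 'a \<Rightarrow> 'a" where
  "energy Q v = (1 - Q) ^ 2 * v / ((1 - v) * (1 - Q * v))"

definition self_factor :: "'a::field \<Rightarrow> 'a \<Rightarrow> 'a" where
  "self_factor Q v = (1 - Q) * v / (1 - Q * v ^ 2)"

definition pair_sum :: "'a::field \<Rightarrow> ('a \<Rightarrow> 'b::plus) \<Rightarrow> 'a \<Rightarrow> 'b" where
  "pair_sum Q f w = f w + f (qinv Q w)"

definition doubled_set :: "'a::field \<Rightarrow> 'a set \<Rightarrow> 'a set" where
  "doubled_set Q W = (\<Union>u\<in>W. {u, qinv Q u})"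

definition generic_set :: "'a::field \<Rightarrow> 'a set \<Rightarrow> bool" where
  "generic_set Q W \<longleftrightarrow> Q \<noteq> 0 \<and> Q \<noteq> 1 \<and> finite W \<and>
     (\<forall>u\<in>W. u \<noteq> 0 \<and> (\<forall>a\<in>{u, qinv Q u}. a \<noteq> 1 \<and> Q * a \<noteq> 1 \<and> Q * a ^ 2 \<noteq> 1)) \<and>
     (\<forall>u\<in>W. \<forall>u'\<in>W. u \<noteq> u' \<longrightarrow>
        (\<forall>a\<in>{u, qinv Q u}. \<forall>b\<in>{u', qinv Q u'}. a \<noteq> b \<and> Q * a * b \<noteq> 1))"

lemma qinv_qinv: "Q \<noteq> 0 \<Longrightarrow> qinv Q (qinv Q u) = u"
  unfolding qinv_def by simp

lemma qinv_nonzero: "Q \<noteq> 0 \<Longrightarrow> u \<noteq> 0 \<Longrightarrow> qinv Q u \<noteq> 0"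
  unfolding qinv_def by simp

lemma generic_setD:
  assumes "generic_set Q W"
  shows "Q \<noteq> 0" "Q \<noteq> 1" "finite W"
  using assms unfolding generic_set_def by auto

lemma generic_set_subset: "generic_set Q W \<Longrightarrow> U \<subseteq> W \<Longrightarrow> generic_set Q U"
  unfolding generic_set_def by (meson finite_subset subsetD)

lemma generic_set_point:
  assumes "generic_set Q W" "u \<in> W" "a \<in> {u, qinv Q u}"
  shows "a \<noteq> 0" "a \<noteq> 1" "Q * a \<noteq> 1" "Q * a ^ 2 \<noteq> 1"
  using assms qinv_nonzero[of Q u] unfolding generic_set_def by auto

lemma generic_set_pair:
  assumes "generic_set Q W" "u \<in> W" "u' \<in> W" "u \<noteq> u'" "a \<in> {u, qinv Q u}" "b \<in> {u', qinv Q u'}"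
  shows "a \<noteq> b" "Q * a * b \<noteq> 1"
  using assms unfolding generic_set_def by blast+

lemma generic_set_qinv_neq:
  assumes "generic_set Q W" "u \<in> W"
  shows "u \<noteq> qinv Q u"
proof
  assume eq: "u = qinv Q u"
  have "u \<noteq> 0" "Q \<noteq> 0" using generic_set_point(1)[OF assms, of u] generic_setD(1)[OF assms(1)] by auto
  then have "u * (Q * u) = 1" using eq unfolding qinv_def by (metis divide_self_if mult_eq_0_iff nonzero_eq_divide_eq)
  then show False using generic_set_point(4)[OF assms, of u] by (simp add: power2_eq_square algebra_simps)
qed

lemma xi_diff: "v \<noteq> 1 \<Longrightarrow> u \<noteq> 1 \<Longrightarrow> xi Q v - xi Q u = (1 - Q) * (v - u) / ((1 - v) * (1 - u))"
  unfolding xi_def step_factor_def by (simp add: divide_simps) (simp add: algebra_simps)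

lemma xi_add:
  fixes Q :: "'a::field_char_0"
  shows "v \<noteq> 1 \<Longrightarrow> u \<noteq> 1 \<Longrightarrow> xi Q v + xi Q u = (1 - Q) * (1 - u * v) / ((1 - v) * (1 - u))"
  unfolding xi_def step_factor_def by (simp add: divide_simps) (simp add: algebra_simps)

lemma xi_ratio:
  fixes Q :: "'a::field_char_0"
  assumes "Q \<noteq> 1" "v \<noteq> 1" "u \<noteq> 1" "v \<noteq> u"
  shows "(xi Q v + xi Q u) / (xi Q v - xi Q u) = (1 - u * v) / (v - u)"
  using assms by (simp add: xi_diff xi_add)

lemma xi_plus_half:
  fixes Q :: "'a::field_char_0"
  shows "v \<noteq> 1 \<Longrightarrow> xi Q v + (1 - Q) / 2 = (1 - Q) / (1 - v)"
  unfolding xi_def step_factor_def by (simp add: field_simps)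

lemma xi_minus_half:
  fixes Q :: "'a::field_char_0"
  shows "v \<noteq> 1 \<Longrightarrow> xi Q v - (1 - Q) / 2 = (1 - Q) * v / (1 - v)"
  unfolding xi_def step_factor_def by (simp add: field_simps)

lemma xi_inj: "Q \<noteq> 1 \<Longrightarrow> v \<noteq> 1 \<Longrightarrow> u \<noteq> 1 \<Longrightarrow> xi Q v = xi Q u \<Longrightarrow> v = u"
  using xi_diff[of v u Q] by auto

lemma scatt_eq_ratios:
  assumes "Q \<noteq> 0" "v \<noteq> u" "u \<noteq> 0" "Q * v * u \<noteq> 1"
  shows "scatt Q v u = (1 - u * v) / (v - u) * ((1 - qinv Q u * v) / (v - qinv Q u))"
  using assms unfolding scatt_def qinv_def by (simp add: divide_simps) (simp add: algebra_simps)

lemma scatt_eq_xi_ratios: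
  fixes Q :: "'a::field_char_0"
  assumes "Q \<noteq> 0" "Q \<noteq> 1" "u \<noteq> 0" "v \<noteq> u" "v \<noteq> qinv Q u" "Q * v * u \<noteq> 1"
    and "v \<noteq> 1" "u \<noteq> 1" "qinv Q u \<noteq> 1"
  shows "scatt Q v u = (xi Q v + xi Q u) / (xi Q v - xi Q u)
    * ((xi Q v + xi Q (qinv Q u)) / (xi Q v - xi Q (qinv Q u)))"
  using assms by (simp add: scatt_eq_ratios xi_ratio)

lemma scatt_qinv: "Q \<noteq> 0 \<Longrightarrow> u \<noteq> 0 \<Longrightarrow> scatt Q v (qinv Q u) = scatt Q v u"
  unfolding scatt_def qinv_def by (simp add: divide_simps) (simp add: algebra_simps)

lemma self_factor_eq_xi_ratio:
  fixes Q :: "'a::field_char_0"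
  assumes "Q \<noteq> 0" "Q \<noteq> 1" "v \<noteq> 0" "v \<noteq> 1" "Q * v \<noteq> 1" "Q * v ^ 2 \<noteq> 1"
  shows "(xi Q v + xi Q (qinv Q v)) / (xi Q v - xi Q (qinv Q v)) = self_factor Q v"
proof -
  have "v \<noteq> qinv Q v" "qinv Q v \<noteq> 1"
    using assms unfolding qinv_def by (auto simp: divide_simps power2_eq_square algebra_simps)
  then have "(xi Q v + xi Q (qinv Q v)) / (xi Q v - xi Q (qinv Q v))
      = (1 - qinv Q v * v) / (v - qinv Q v)"
    using assms by (simp add: xi_ratio)
  also have "\<dots> = self_factor Q v"
    using assms unfolding qinv_def self_factor_def
    by (simp add: divide_simps power2_eq_square) (simp add: algebra_simps)
  finally show ?thesis .
qed

lemma self_factor_partial_fractions: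
  fixes Q :: "'a::field_char_0"
  assumes "Q \<noteq> 1" "v \<noteq> 0" "v \<noteq> 1" "Q * v ^ 2 \<noteq> 1"
  shows "(1 + 1 / (xi Q v - (1 - Q) / 2) + Q / (xi Q v + (1 - Q) / 2)) * self_factor Q v = 1"
  unfolding xi_minus_half[OF assms(3)] xi_plus_half[OF assms(3)] self_factor_def
  using assms by (simp add: divide_simps power2_eq_square) (simp add: algebra_simps)

lemma energy_eq_xi:
  fixes Q :: "'a::field_char_0"
  assumes "Q \<noteq> 0" "v \<noteq> 0" "v \<noteq> 1" "Q * v \<noteq> 1"
  shows "energy Q v = xi Q v + xi Q (qinv Q v)"
  using assms unfolding xi_def step_factor_def energy_def qinv_def
  by (simp add: divide_simps power2_eq_square) (simp add: algebra_simps)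

lemma step_factor_quadratic:
  assumes "v \<noteq> 1" "Q * v \<noteq> 1"
  shows "step_factor Q v ^ 2 + Q - (1 + Q) * step_factor Q v = energy Q v * step_factor Q v"
  using assms unfolding energy_def step_factor_def
  by (simp add: divide_simps power2_eq_square) (simp add: algebra_simps)

lemma scatt_two_body:
  assumes "a \<noteq> b" "a \<noteq> 1" "b \<noteq> 1" "Q * a * b \<noteq> 1"
  shows "scatt Q a b * (Q - (1 + Q) * step_factor Q a + step_factor Q a * step_factor Q b)
    + scatt Q b a * (Q - (1 + Q) * step_factor Q b + step_factor Q a * step_factor Q b) = 0"
proof -
  have "Q * b * a \<noteq> 1" "b - a \<noteq> 0" "a - b \<noteq> 0" using assms by (auto simp: mult_ac)
  then show ?thesis
    using assms unfolding scatt_def step_factor_def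
    by (simp add: divide_simps) (simp add: algebra_simps)
qed

lemma energy_qinv:
  assumes "Q \<noteq> 0" "v \<noteq> 0" "v \<noteq> 1" "Q * v \<noteq> 1"
  shows "energy Q (qinv Q v) = energy Q v"
  using assms unfolding energy_def qinv_def
  by (simp add: divide_simps power2_eq_square) (simp add: algebra_simps)

lemma finite_doubled_set: "finite W \<Longrightarrow> finite (doubled_set Q W)"
  unfolding doubled_set_def by auto

lemma doubled_set_pairs_disjoint:
  "generic_set Q W \<Longrightarrow> \<forall>u\<in>W. \<forall>u'\<in>W. u \<noteq> u' \<longrightarrow> {u, qinv Q u} \<inter> {u', qinv Q u'} = {}"
  using generic_set_pair by blast

lemma sum_doubled_set:
  assumes "generic_set Q W"
  shows "(\<Sum>v\<in>doubled_set Q W. g v) = (\<Sum>u\<in>W. pair_sum Q g u)"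
proof -
  have "(\<Sum>v\<in>doubled_set Q W. g v) = (\<Sum>u\<in>W. sum g {u, qinv Q u})"
    unfolding doubled_set_def
    by (rule sum.UNION_disjoint[OF generic_setD(3)[OF assms] _ doubled_set_pairs_disjoint[OF assms]]) simp
  also have "\<dots> = (\<Sum>u\<in>W. pair_sum Q g u)"
    by (rule sum.cong[OF refl]) (use generic_set_qinv_neq[OF assms] in \<open>auto simp: pair_sum_def\<close>)
  finally show ?thesis .
qed

lemma prod_doubled_set:
  assumes "generic_set Q W"
  shows "(\<Prod>v\<in>doubled_set Q W. g v) = (\<Prod>u\<in>W. g u * g (qinv Q u))"
proof -
  have "(\<Prod>v\<in>doubled_set Q W. g v) = (\<Prod>u\<in>W. prod g {u, qinv Q u})"
    unfolding doubled_set_def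
    by (rule prod.UNION_disjoint[OF generic_setD(3)[OF assms] _ doubled_set_pairs_disjoint[OF assms]]) simp
  also have "\<dots> = (\<Prod>u\<in>W. g u * g (qinv Q u))"
    by (rule prod.cong[OF refl]) (use generic_set_qinv_neq[OF assms] in auto)
  finally show ?thesis .
qed

lemma card_doubled_set:
  assumes "generic_set Q W"
  shows "card (doubled_set Q W) = 2 * card W"
  using sum_doubled_set[OF assms, of "\<lambda>_. 1 :: nat"] by (simp add: pair_sum_def)

lemma doubled_set_point:
  assumes "generic_set Q W" "v \<in> doubled_set Q W"
  shows "v \<noteq> 0" "v \<noteq> 1" "Q * v \<noteq> 1" "Q * v ^ 2 \<noteq> 1"
proof -
  obtain u where "u \<in> W" "v \<in> {u, qinv Q u}" using assms(2) unfolding doubled_set_def by blast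
  from generic_set_point[OF assms(1) this]
  show "v \<noteq> 0" "v \<noteq> 1" "Q * v \<noteq> 1" "Q * v ^ 2 \<noteq> 1" by blast+
qed

lemma inj_on_xi_doubled_set:
  assumes "generic_set Q W"
  shows "inj_on (xi Q) (doubled_set Q W)"
proof (rule inj_onI)
  fix v u assume "v \<in> doubled_set Q W" "u \<in> doubled_set Q W" "xi Q v = xi Q u"
  then show "v = u" using xi_inj generic_setD(2)[OF assms] doubled_set_point(2)[OF assms] by blast
qed

lemma card_xi_doubled_set:
  "generic_set Q W \<Longrightarrow> card (xi Q ` doubled_set Q W) = 2 * card W"
  by (simp add: card_image inj_on_xi_doubled_set card_doubled_set)

lemma sum_xi_doubled_set:
  "generic_set Q W \<Longrightarrow> (\<Sum>x\<in>xi Q ` doubled_set Q W. g x) = (\<Sum>u\<in>W. pair_sum Q (\<lambda>v. g (xi Q v)) u)"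
  by (simp add: sum.reindex inj_on_xi_doubled_set sum_doubled_set)

lemma prod_xi_doubled_set:
  "generic_set Q W \<Longrightarrow> (\<Prod>x\<in>xi Q ` doubled_set Q W. g x) = (\<Prod>u\<in>W. g (xi Q u) * g (xi Q (qinv Q u)))"
  by (simp add: prod.reindex inj_on_xi_doubled_set prod_doubled_set)

lemma xi_doubled_set_remove:
  assumes "generic_set Q W" "w \<in> W" "v \<in> {w, qinv Q w}"
  shows "xi Q ` doubled_set Q W - {xi Q v} = insert (xi Q (qinv Q v)) (xi Q ` doubled_set Q (W - {w}))"
    and "xi Q (qinv Q v) \<notin> xi Q ` doubled_set Q (W - {w})"
proof -
  let ?D = "doubled_set Q W" and ?D' = "doubled_set Q (W - {w})"
  have Q0: "Q \<noteq> 0" using generic_setD[OF assms(1)] by simp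
  have pair: "{v, qinv Q v} = {w, qinv Q w}"
    using assms(3) by (cases "v = w") (auto simp: qinv_qinv[OF Q0])
  have split: "?D = {v, qinv Q v} \<union> ?D'"
    unfolding pair doubled_set_def using assms(2) by blast
  have disj: "a \<notin> ?D'" if "a \<in> {v, qinv Q v}" for a
  proof
    assume "a \<in> ?D'"
    then obtain u where "u \<in> W" "w \<noteq> u" "a \<in> {u, qinv Q u}" unfolding doubled_set_def by blast
    then show False using generic_set_pair(1)[OF assms(1,2)] that pair by blast
  qed
  have inj: "inj_on (xi Q) ?D" by (rule inj_on_xi_doubled_set[OF assms(1)])
  have sub: "v \<in> ?D" "qinv Q v \<in> ?D" "?D' \<subseteq> ?D" using split by auto
  have vv: "v \<noteq> qinv Q v"
    using generic_set_qinv_neq[OF assms(1,2)] assms(3) by (cases "v = w") (auto simp: qinv_qinv[OF Q0])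
  show "xi Q (qinv Q v) \<notin> xi Q ` ?D'"
    using inj_on_image_mem_iff[OF inj sub(2,3)] disj by simp
  moreover have "xi Q v \<notin> xi Q ` ?D'"
    using inj_on_image_mem_iff[OF inj sub(1,3)] disj by simp
  moreover have "xi Q v \<noteq> xi Q (qinv Q v)"
    using inj_on_contraD[OF inj vv sub(1,2)] .
  moreover have "xi Q ` ?D = insert (xi Q v) (insert (xi Q (qinv Q v)) (xi Q ` ?D'))"
    unfolding split by simp
  ultimately show "xi Q ` ?D - {xi Q v} = insert (xi Q (qinv Q v)) (xi Q ` ?D')"
    by auto
qed

lemma ratio_prod_xi_doubled_set:
  fixes Q :: "'a::field_char_0"
  assumes gen: "generic_set Q W" and w: "w \<in> W" and v: "v \<in> {w, qinv Q w}"
  shows "ratio_prod (xi Q ` doubled_set Q W - {xi Q v}) (xi Q v)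
    = self_factor Q v * scatt_prod Q v (W - {w})"
proof -
  have gen': "generic_set Q (W - {w})" using generic_set_subset[OF gen] by blast
  have Q: "Q \<noteq> 0" "Q \<noteq> 1" using generic_setD[OF gen] by auto
  have fin: "finite (xi Q ` doubled_set Q (W - {w}))"
    using finite_doubled_set[OF generic_setD(3)[OF gen']] by blast
  have "ratio_prod (xi Q ` doubled_set Q W - {xi Q v}) (xi Q v)
      = (xi Q v + xi Q (qinv Q v)) / (xi Q v - xi Q (qinv Q v))
        * ratio_prod (xi Q ` doubled_set Q (W - {w})) (xi Q v)"
    unfolding xi_doubled_set_remove(1)[OF assms]
    using ratio_prod_insert[OF fin xi_doubled_set_remove(2)[OF assms]] .
  also have "(xi Q v + xi Q (qinv Q v)) / (xi Q v - xi Q (qinv Q v)) = self_factor Q v"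
    using self_factor_eq_xi_ratio[OF Q] generic_set_point[OF gen w v] by blast
  also have "ratio_prod (xi Q ` doubled_set Q (W - {w})) (xi Q v) = scatt_prod Q v (W - {w})"
    unfolding ratio_prod_def prod_xi_doubled_set[OF gen'] scatt_prod_def
  proof (rule prod.cong[OF refl])
    fix u assume "u \<in> W - {w}"
    then have u: "u \<in> W" "w \<noteq> u" by auto
    have "v \<noteq> u" using generic_set_pair(1)[OF gen w u v, of u] by simp
    have "v \<noteq> qinv Q u" using generic_set_pair(1)[OF gen w u v, of "qinv Q u"] by simp
    have "Q * v * u \<noteq> 1" using generic_set_pair(2)[OF gen w u v, of u] by simp
    have "u \<noteq> 0" "u \<noteq> 1" "qinv Q u \<noteq> 1" using generic_set_point[OF gen u(1)] by auto
    have "v \<noteq> 1" using generic_set_point[OF gen w v] by blast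
    show "(xi Q v + xi Q u) / (xi Q v - xi Q u)
        * ((xi Q v + xi Q (qinv Q u)) / (xi Q v - xi Q (qinv Q u))) = scatt Q v u"
      by (rule scatt_eq_xi_ratios[OF Q, symmetric]) fact+
  qed
  finally show ?thesis .
qed

section \<open>Sums over the spectral variable of one particle\<close>

definition first_coeff :: "'a::field \<Rightarrow> ('a \<Rightarrow> 'a) \<Rightarrow> 'a set \<Rightarrow> 'a \<Rightarrow> 'a" where
  "first_coeff Q h W w = pair_sum Q (\<lambda>v. h v * scatt_prod Q v (W - {w})) w"

definition lead_sum :: "'a::field \<Rightarrow> ('a \<Rightarrow> 'a) \<Rightarrow> 'a set \<Rightarrow> 'a" where
  "lead_sum Q h W = (\<Sum>w\<in>W. first_coeff Q h W w)"

lemma lead_sum_eq_ratio_sum: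
  fixes Q :: "'a::field_char_0"
  assumes gen: "generic_set Q W"
    and h: "\<And>v. v \<in> doubled_set Q W \<Longrightarrow> h v = f (xi Q v) * self_factor Q v"
  shows "lead_sum Q h W = ratio_sum (xi Q ` doubled_set Q W) f"
proof -
  let ?X = "xi Q ` doubled_set Q W"
  have "ratio_sum ?X f = (\<Sum>w\<in>W. pair_sum Q (\<lambda>v. f (xi Q v) * ratio_prod (?X - {xi Q v}) (xi Q v)) w)"
    unfolding ratio_sum_def sum_xi_doubled_set[OF gen] ..
  also have "\<dots> = lead_sum Q h W"
    unfolding lead_sum_def first_coeff_def
  proof (rule sum.cong[OF refl])
    fix w assume w: "w \<in> W"
    have "f (xi Q v) * ratio_prod (?X - {xi Q v}) (xi Q v) = h v * scatt_prod Q v (W - {w})"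
      if v: "v \<in> {w, qinv Q w}" for v
    proof -
      have "v \<in> doubled_set Q W" using w v unfolding doubled_set_def by blast
      then show ?thesis using ratio_prod_xi_doubled_set[OF gen w v] h by simp
    qed
    then show "pair_sum Q (\<lambda>v. f (xi Q v) * ratio_prod (?X - {xi Q v}) (xi Q v)) w
        = pair_sum Q (\<lambda>v. h v * scatt_prod Q v (W - {w})) w"
      unfolding pair_sum_def by simp
  qed
  finally show ?thesis ..
qed

context
  fixes Q :: "'a::field_char_0" and W :: "'a set"
  assumes gen: "generic_set Q W"
begin

private lemma Q_neq: "Q \<noteq> 0" "Q \<noteq> 1"
  using generic_setD[OF gen] by auto

lemma sum_xi_doubled_set_eq_energy: "(\<Sum>x\<in>xi Q ` doubled_set Q W. x) = (\<Sum>u\<in>W. energy Q u)"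
  unfolding sum_xi_doubled_set[OF gen] pair_sum_def
proof (rule sum.cong[OF refl])
  fix u assume "u \<in> W"
  then show "xi Q u + xi Q (qinv Q u) = energy Q u"
    using energy_eq_xi[OF Q_neq(1)] generic_set_point[OF gen, of u u] by simp
qed

lemma finite_xi_doubled_set: "finite (xi Q ` doubled_set Q W)"
  by (simp add: finite_doubled_set generic_setD(3)[OF gen])

lemma ratio_sum_xi_doubled_set_one: "ratio_sum (xi Q ` doubled_set Q W) (\<lambda>_. 1) = 0"
  using ratio_sum_one[OF finite_xi_doubled_set] by (simp add: card_xi_doubled_set[OF gen])

lemma half_notin_xi_doubled_set:
  "(1 - Q) / 2 \<notin> xi Q ` doubled_set Q W" "- ((1 - Q) / 2) \<notin> xi Q ` doubled_set Q W"
proof -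
  have neq: "xi Q v \<noteq> (1 - Q) / 2" "xi Q v \<noteq> - ((1 - Q) / 2)" if "v \<in> doubled_set Q W" for v
  proof -
    have "v \<noteq> 0" "v \<noteq> 1" "1 - Q \<noteq> 0" using doubled_set_point(1,2)[OF gen that] Q_neq by auto
    then have "xi Q v - (1 - Q) / 2 \<noteq> 0" "xi Q v + (1 - Q) / 2 \<noteq> 0"
      by (simp_all add: xi_minus_half xi_plus_half)
    then show "xi Q v \<noteq> (1 - Q) / 2" "xi Q v \<noteq> - ((1 - Q) / 2)" by auto
  qed
  show "(1 - Q) / 2 \<notin> xi Q ` doubled_set Q W" using neq(1) by (metis imageE)
  show "- ((1 - Q) / 2) \<notin> xi Q ` doubled_set Q W" using neq(2) by (metis imageE)
qed

lemma ratio_prod_xi_doubled_set_half: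
  "ratio_prod (xi Q ` doubled_set Q W) ((1 - Q) / 2) = Q ^ card W"
  "ratio_prod (xi Q ` doubled_set Q W) (- ((1 - Q) / 2)) = (1 / Q) ^ card W"
proof -
  have factors: "((1 - Q) / 2 + xi Q a) / ((1 - Q) / 2 - xi Q a) = - 1 / a"
      "(- ((1 - Q) / 2) + xi Q a) / (- ((1 - Q) / 2) - xi Q a) = - a"
    if "a \<noteq> 0" "a \<noteq> 1" for a
  proof -
    have eqs: "(1 - Q) / 2 + xi Q a = (1 - Q) / (1 - a)" "(1 - Q) / 2 - xi Q a = - ((1 - Q) * a / (1 - a))"
      "- ((1 - Q) / 2) + xi Q a = (1 - Q) * a / (1 - a)" "- ((1 - Q) / 2) - xi Q a = - ((1 - Q) / (1 - a))"
      using xi_plus_half[OF that(2), of Q] xi_minus_half[OF that(2), of Q] by (simp_all add: algebra_simps)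
    show "((1 - Q) / 2 + xi Q a) / ((1 - Q) / 2 - xi Q a) = - 1 / a"
      "(- ((1 - Q) / 2) + xi Q a) / (- ((1 - Q) / 2) - xi Q a) = - a"
      unfolding eqs using that Q_neq by (simp_all add: divide_simps)
  qed
  have pt: "u \<noteq> 0" "u \<noteq> 1" "qinv Q u \<noteq> 0" "qinv Q u \<noteq> 1" if "u \<in> W" for u
    using generic_set_point[OF gen that] by auto
  have "ratio_prod (xi Q ` doubled_set Q W) ((1 - Q) / 2) = (\<Prod>u\<in>W. (- 1 / u) * (- 1 / qinv Q u))"
    unfolding ratio_prod_def prod_xi_doubled_set[OF gen] by (rule prod.cong[OF refl]) (simp only: factors pt not_False_eq_True)
  also have "\<dots> = (\<Prod>u\<in>W. Q)"
    by (rule prod.cong) (simp_all add: pt qinv_def)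
  finally show "ratio_prod (xi Q ` doubled_set Q W) ((1 - Q) / 2) = Q ^ card W" by simp
  have "ratio_prod (xi Q ` doubled_set Q W) (- ((1 - Q) / 2)) = (\<Prod>u\<in>W. (- u) * (- qinv Q u))"
    unfolding ratio_prod_def prod_xi_doubled_set[OF gen] by (rule prod.cong[OF refl]) (simp only: factors pt not_False_eq_True)
  also have "\<dots> = (\<Prod>u\<in>W. 1 / Q)"
    by (rule prod.cong) (simp_all add: pt qinv_def)
  finally show "ratio_prod (xi Q ` doubled_set Q W) (- ((1 - Q) / 2)) = (1 / Q) ^ card W" by simp
qed

lemma ratio_sum_xi_doubled_set_poles:
  "ratio_sum (xi Q ` doubled_set Q W) (\<lambda>x. 1 / (x - (1 - Q) / 2)) = (1 - Q ^ card W) / (1 - Q)"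
  "ratio_sum (xi Q ` doubled_set Q W) (\<lambda>x. 1 / (x + (1 - Q) / 2)) = ((1 / Q) ^ card W - 1) / (1 - Q)"
proof -
  let ?X = "xi Q ` doubled_set Q W"
  define d where "d = (1 - Q) / 2"
  have d: "2 * d = 1 - Q" "1 - Q \<noteq> 0" unfolding d_def using Q_neq by auto
  have "2 * d * ratio_sum ?X (\<lambda>x. 1 / (x - d)) = 1 - Q ^ card W"
    using ratio_sum_pole[OF finite_xi_doubled_set half_notin_xi_doubled_set(1)]
    by (simp add: d_def ratio_prod_xi_doubled_set_half ratio_sum_xi_doubled_set_one)
  then show "ratio_sum ?X (\<lambda>x. 1 / (x - (1 - Q) / 2)) = (1 - Q ^ card W) / (1 - Q)"
    unfolding d_def[symmetric] using d by (simp add: eq_divide_eq mult.commute)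
  have "2 * - d * ratio_sum ?X (\<lambda>x. 1 / (x - - d)) = 1 - (1 / Q) ^ card W"
    using ratio_sum_pole[OF finite_xi_doubled_set half_notin_xi_doubled_set(2)]
    by (simp only: d_def ratio_prod_xi_doubled_set_half ratio_sum_xi_doubled_set_one) simp
  then have "2 * d * ratio_sum ?X (\<lambda>x. 1 / (x + d)) = (1 / Q) ^ card W - 1"
    by (simp add: algebra_simps)
  then show "ratio_sum ?X (\<lambda>x. 1 / (x + (1 - Q) / 2)) = ((1 / Q) ^ card W - 1) / (1 - Q)"
    unfolding d_def[symmetric] using d by (simp add: eq_divide_eq mult.commute)
qed

lemma lead_sum_one:
  assumes "card W = Suc k"
  shows "lead_sum Q (\<lambda>_. 1) W = (1 - Q ^ Suc k) * (1 + Q ^ k) / (Q ^ k * (1 - Q))"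
proof -
  let ?X = "xi Q ` doubled_set Q W" and ?d = "(1 - Q) / 2"
  have "lead_sum Q (\<lambda>_. 1) W = ratio_sum ?X (\<lambda>x. 1 + 1 / (x - ?d) + Q * (1 / (x + ?d)))"
  proof (rule lead_sum_eq_ratio_sum[OF gen])
    fix v assume "v \<in> doubled_set Q W"
    then show "1 = (1 + 1 / (xi Q v - ?d) + Q * (1 / (xi Q v + ?d))) * self_factor Q v"
      using self_factor_partial_fractions[OF Q_neq(2)] doubled_set_point[OF gen] by simp
  qed
  also have "\<dots> = ratio_sum ?X (\<lambda>x. 1 / (x - ?d)) + Q * ratio_sum ?X (\<lambda>x. 1 / (x + ?d))"
    by (simp only: ratio_sum_add ratio_sum_cmult ratio_sum_xi_doubled_set_one add_0)
  also have "\<dots> = (1 - Q ^ card W) / (1 - Q) + Q * (((1 / Q) ^ card W - 1) / (1 - Q))"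
    unfolding ratio_sum_xi_doubled_set_poles ..
  also have "\<dots> = (1 - Q ^ Suc k) * (1 + Q ^ k) / (Q ^ k * (1 - Q))"
  proof -
    have "Q * ((1 / Q) ^ Suc k - 1) = (1 - Q ^ Suc k) / Q ^ k"
      using Q_neq by (simp add: power_one_over divide_simps)
    then show ?thesis
      unfolding assms using Q_neq by (simp add: divide_simps) (simp add: algebra_simps)
  qed
  finally show ?thesis .
qed

end

section \<open>Two-body collisions\<close>

text \<open>With \<open>p = \<phi>\<^sub>m\<^sub>-\<^sub>1\<close>, so that \<open>p \<cdot> step_factor = \<phi>\<^sub>m\<close>, this is the coefficient of the
  eigenfunction of the other particles in the defect of the free equation when the two largest
  particles sit at \<open>m - 1\<close> and \<open>m\<close>.\<close>

definition collision_coeff :: "'a::field \<Rightarrow> ('a \<Rightarrow> 'a) \<Rightarrow> 'a set \<Rightarrow> 'a \<Rightarrow> 'a \<Rightarrow> 'a" where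
  "collision_coeff Q p W a b =
     Q * (first_coeff Q p W a * first_coeff Q p (W - {a}) b)
   - Q * (first_coeff Q (\<lambda>v. p v * step_factor Q v) W a * first_coeff Q p (W - {a}) b)
   + first_coeff Q (\<lambda>v. p v * step_factor Q v) W a * first_coeff Q (\<lambda>v. p v * step_factor Q v) (W - {a}) b
   - first_coeff Q (\<lambda>v. p v * step_factor Q v) W a * first_coeff Q p (W - {a}) b"

lemma first_coeff_pair:
  assumes gen: "generic_set Q W" and ab: "a \<in> W" "b \<in> W" "a \<noteq> b"
  shows "first_coeff Q f W a * first_coeff Q g (W - {a}) b
    = pair_sum Q (\<lambda>v. pair_sum Q (\<lambda>v'. f v * g v' * scatt Q v v'
        * scatt_prod Q v (W - {a} - {b}) * scatt_prod Q v' (W - {a} - {b})) b) a"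
proof -
  have Q0: "Q \<noteq> 0" using generic_setD[OF gen] by simp
  have "b \<noteq> 0" using generic_set_point[OF gen ab(2), of b] by simp
  then have "scatt Q v (qinv Q b) = scatt Q v b" for v by (rule scatt_qinv[OF Q0])
  moreover have "scatt_prod Q v (W - {a}) = scatt Q v b * scatt_prod Q v (W - {a} - {b})" for v
    using prod.remove[of "W - {a}" b "scatt Q v"] generic_setD(3)[OF gen] ab
    unfolding scatt_prod_def by auto
  ultimately show ?thesis
    unfolding first_coeff_def pair_sum_def by (simp add: algebra_simps)
qed

lemma collision_coeff_antisym:
  fixes Q :: "'a::field_char_0"
  assumes gen: "generic_set Q W" and ab: "a \<in> W" "b \<in> W" "a \<noteq> b"
  shows "collision_coeff Q p W a b + collision_coeff Q p W b a = 0"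
proof -
  define U where "U = W - {a} - {b}"
  have U: "W - {b} - {a} = U" unfolding U_def by auto
  define Y where "Y v v' = scatt Q v v' * scatt_prod Q v U * scatt_prod Q v' U
    * (p v * p v' * (Q - (1 + Q) * step_factor Q v + step_factor Q v * step_factor Q v'))" for v v'
  have Y: "collision_coeff Q p W a' b' = pair_sum Q (\<lambda>v. pair_sum Q (\<lambda>v'. Y v v') b') a'"
    if "a' \<in> W" "b' \<in> W" "a' \<noteq> b'" "W - {a'} - {b'} = U" for a' b'
    unfolding collision_coeff_def first_coeff_pair[OF gen that(1-3)] that(4) Y_def pair_sum_def
    by (simp add: algebra_simps)
  have Y_antisym: "Y v v' + Y v' v = 0" if "v \<in> {a, qinv Q a}" "v' \<in> {b, qinv Q b}" for v v'
  proof -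
    have "v \<noteq> v'" "Q * v * v' \<noteq> 1" using generic_set_pair[OF gen ab that] by auto
    moreover have "v \<noteq> 1" "v' \<noteq> 1"
      using generic_set_point(2)[OF gen ab(1) that(1)] generic_set_point(2)[OF gen ab(2) that(2)] .
    ultimately have "scatt Q v v' * (Q - (1 + Q) * step_factor Q v + step_factor Q v * step_factor Q v')
      + scatt Q v' v * (Q - (1 + Q) * step_factor Q v' + step_factor Q v * step_factor Q v') = 0"
      using scatt_two_body[of v v' Q] by blast
    then have "(scatt_prod Q v U * scatt_prod Q v' U * p v * p v')
      * (scatt Q v v' * (Q - (1 + Q) * step_factor Q v + step_factor Q v * step_factor Q v')
       + scatt Q v' v * (Q - (1 + Q) * step_factor Q v' + step_factor Q v * step_factor Q v')) = 0"
      by simp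
    then show ?thesis unfolding Y_def by (simp add: algebra_simps)
  qed
  have "collision_coeff Q p W a b + collision_coeff Q p W b a
      = (Y a b + Y b a) + (Y a (qinv Q b) + Y (qinv Q b) a)
      + (Y (qinv Q a) b + Y b (qinv Q a)) + (Y (qinv Q a) (qinv Q b) + Y (qinv Q b) (qinv Q a))"
    unfolding Y[OF ab U_def[symmetric]] Y[OF ab(2,1) ab(3)[symmetric] U] pair_sum_def
    by (simp add: algebra_simps)
  also have "\<dots> = 0" using Y_antisym by simp
  finally show ?thesis .
qed

lemma sum_offdiag_antisym:
  fixes F :: "'a \<Rightarrow> 'a \<Rightarrow> 'b::comm_monoid_add"
  assumes "finite W" "\<And>a b. a \<in> W \<Longrightarrow> b \<in> W \<Longrightarrow> a \<noteq> b \<Longrightarrow> F a b + F b a = 0"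
  shows "(\<Sum>a\<in>W. \<Sum>b\<in>W - {a}. F a b) = 0"
  using assms
proof (induction W rule: finite_induct)
  case empty
  then show ?case by simp
next
  case (insert c W)
  have "(\<Sum>a\<in>W. \<Sum>b\<in>insert c W - {a}. F a b) = (\<Sum>a\<in>W. F a c + (\<Sum>b\<in>W - {a}. F a b))"
  proof (rule sum.cong[OF refl])
    fix a assume "a \<in> W"
    then have "insert c W - {a} = insert c (W - {a})" "c \<notin> W - {a}" using insert(2) by auto
    then show "(\<Sum>b\<in>insert c W - {a}. F a b) = F a c + (\<Sum>b\<in>W - {a}. F a b)"
      using insert(1) by simp
  qed
  also have "\<dots> = (\<Sum>a\<in>W. F a c)" using insert by (simp add: sum.distrib)
  finally have rest: "(\<Sum>a\<in>W. \<Sum>b\<in>insert c W - {a}. F a b) = (\<Sum>a\<in>W. F a c)" .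
  have "insert c W - {c} = W" using insert(2) by auto
  then have "(\<Sum>a\<in>insert c W. \<Sum>b\<in>insert c W - {a}. F a b) = (\<Sum>b\<in>W. F c b) + (\<Sum>a\<in>W. F a c)"
    using insert(1,2) rest by simp
  also have "\<dots> = (\<Sum>b\<in>W. F c b + F b c)" by (simp add: sum.distrib)
  also have "\<dots> = 0" using insert(2,4) by (intro sum.neutral) auto
  finally show ?case .
qed

section \<open>The recursive eigenfunction\<close>

lemma phi_Suc: "k \<ge> 1 \<Longrightarrow> phi q \<alpha> (Suc k) z = phi q \<alpha> k z * step_factor (of_real q) z"
  unfolding phi_def step_factor_def by (cases k) (simp_all add: mult_ac)

lemma phi_eq_step_factor:
  assumes "v \<noteq> 1" "of_real q * v ^ 2 \<noteq> 1"
  shows "phi q \<alpha> k v = (step_factor (of_real q) v - of_real q - of_real \<alpha>)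
    * step_factor (of_real q) v ^ (k - 1) * self_factor (of_real q) v"
  using assms unfolding phi_def step_factor_def self_factor_def
  by (simp add: divide_simps) (simp add: algebra_simps)

lemma phi_free:
  assumes "m \<ge> 2" "v \<noteq> 1" "of_real q * v \<noteq> 1"
  shows "phi q \<alpha> (m + 1) v + of_real q * phi q \<alpha> (m - 1) v - (1 + of_real q) * phi q \<alpha> m v
    = energy (of_real q) v * phi q \<alpha> m v"
proof -
  let ?s = "step_factor (of_real q) v"
  obtain k where k: "m = Suc k" "k \<ge> 1" using assms(1) by (cases m) auto
  have "phi q \<alpha> (m + 1) v = phi q \<alpha> k v * ?s * ?s" "phi q \<alpha> m v = phi q \<alpha> k v * ?s"
    using phi_Suc[of k] phi_Suc[of "Suc k"] k by simp_all
  moreover have "phi q \<alpha> (m - 1) v = phi q \<alpha> k v" using k by simp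
  ultimately have "phi q \<alpha> (m + 1) v + of_real q * phi q \<alpha> (m - 1) v - (1 + of_real q) * phi q \<alpha> m v
      = phi q \<alpha> k v * (?s ^ 2 + of_real q - (1 + of_real q) * ?s)"
    by (simp add: algebra_simps power2_eq_square)
  also have "\<dots> = energy (of_real q) v * (phi q \<alpha> k v * ?s)"
    unfolding step_factor_quadratic[OF assms(2,3)] by (simp only: mult_ac)
  finally show ?thesis using \<open>phi q \<alpha> m v = phi q \<alpha> k v * ?s\<close> by simp
qed

context
  fixes q \<alpha> :: real and W :: "complex set"
  assumes gen: "generic_set (of_real q) W"
begin

lemma lead_sum_phi:
  "lead_sum (of_real q) (phi q \<alpha> k) W = ratio_sum (xi (of_real q) ` doubled_set (of_real q) W)
    (\<lambda>x. (x + (1 + of_real q) / 2 - of_real q - of_real \<alpha>) * (x + (1 + of_real q) / 2) ^ (k - 1))"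
proof (rule lead_sum_eq_ratio_sum[OF gen])
  fix v assume "v \<in> doubled_set (of_real q) W"
  then have "v \<noteq> 1" "of_real q * v ^ 2 \<noteq> 1" using doubled_set_point[OF gen] by auto
  moreover have "xi (of_real q) v + (1 + of_real q) / 2 = step_factor (of_real q) v"
    unfolding xi_def by simp
  ultimately show "phi q \<alpha> k v = (xi (of_real q) v + (1 + of_real q) / 2 - of_real q - of_real \<alpha>)
      * (xi (of_real q) v + (1 + of_real q) / 2) ^ (k - 1) * self_factor (of_real q) v"
    using phi_eq_step_factor by simp
qed

lemma lead_sum_phi_one: "lead_sum (of_real q) (phi q \<alpha> 1) W = (\<Sum>u\<in>W. energy (of_real q) u)"
proof -
  let ?X = "xi (of_real q) ` doubled_set (of_real q) W"
  have "lead_sum (of_real q) (phi q \<alpha> 1) W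
      = ratio_sum ?X (\<lambda>x. x) + ((1 + of_real q) / 2 - of_real q - of_real \<alpha>) * ratio_sum ?X (\<lambda>_. 1)"
    unfolding lead_sum_phi ratio_sum_cmult[symmetric] ratio_sum_add[symmetric] by (simp add: algebra_simps)
  then show ?thesis
    using ratio_sum_id[OF finite_xi_doubled_set[OF gen]] sum_xi_doubled_set_eq_energy[OF gen]
      ratio_sum_xi_doubled_set_one[OF gen] by simp
qed

lemma lead_sum_phi_two:
  "lead_sum (of_real q) (phi q \<alpha> 2) W
    = (\<Sum>u\<in>W. energy (of_real q) u) ^ 2 + (1 - of_real \<alpha>) * (\<Sum>u\<in>W. energy (of_real q) u)"
proof -
  let ?X = "xi (of_real q) ` doubled_set (of_real q) W"
  define c :: complex where "c = (1 + of_real q) / 2"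
  have "(x + c - of_real q - of_real \<alpha>) * (x + c) ^ (2 - 1)
      = x ^ 2 + ((c + c - of_real q - of_real \<alpha>) * x + c * (c - of_real q - of_real \<alpha>) * 1)" for x
    by (simp add: algebra_simps power2_eq_square)
  moreover have "c + c - of_real q - of_real \<alpha> = 1 - of_real \<alpha>" unfolding c_def by (simp add: field_simps)
  ultimately have "lead_sum (of_real q) (phi q \<alpha> 2) W
      = ratio_sum ?X (\<lambda>x. x ^ 2) + ((1 - of_real \<alpha>) * ratio_sum ?X (\<lambda>x. x)
        + c * (c - of_real q - of_real \<alpha>) * ratio_sum ?X (\<lambda>_. 1))"
    unfolding lead_sum_phi c_def[symmetric] by (simp only: ratio_sum_add ratio_sum_cmult)
  then show ?thesis
    using ratio_sum_id[OF finite_xi_doubled_set[OF gen]] ratio_sum_square[OF finite_xi_doubled_set[OF gen]]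
      sum_xi_doubled_set_eq_energy[OF gen] ratio_sum_xi_doubled_set_one[OF gen] by simp
qed

end

lemma parts_insert_max:
  assumes "finite Z" "\<forall>z\<in>Z. z < m"
  shows "parts (insert m Z) = m # parts Z"
proof -
  have "m \<notin> Z" using assms(2) by auto
  then have "sorted_wrt (<) (sorted_list_of_set Z @ [m]) \<and> set (sorted_list_of_set Z @ [m]) = insert m Z
      \<and> length (sorted_list_of_set Z @ [m]) = card (insert m Z)"
    using assms by (simp add: sorted_wrt_append)
  then have "sorted_list_of_set (insert m Z) = sorted_list_of_set Z @ [m]"
    using sorted_list_of_set.sorted_key_list_of_set_unique[of "insert m Z" "sorted_list_of_set Z @ [m]"]
      assms(1) by simp
  then show ?thesis unfolding parts_def by simp
qed

text \<open>\<open>F\<^sub>y\<close> with spectral set \<open>W\<close> (see \<open>Ffun_eq_bethe\<close>), expanded along the largest particle: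
  \<open>first_coeff\<close> accounts for the spectral variable of that particle and its sign.\<close>

primrec bethe_list :: "real \<Rightarrow> real \<Rightarrow> complex set \<Rightarrow> nat list \<Rightarrow> complex" where
  "bethe_list q \<alpha> W [] = of_real \<alpha> ^ card W"
| "bethe_list q \<alpha> W (y # ys) =
     (\<Sum>w\<in>W. first_coeff (of_real q) (phi q \<alpha> y) W w * bethe_list q \<alpha> (W - {w}) ys)"

definition bethe :: "real \<Rightarrow> real \<Rightarrow> complex set \<Rightarrow> nat set \<Rightarrow> complex" where
  "bethe q \<alpha> W Y = bethe_list q \<alpha> W (parts Y)"

lemma bethe_empty: "bethe q \<alpha> W {} = of_real \<alpha> ^ card W"
  unfolding bethe_def parts_def by simp

lemma bethe_insert_max:
  "finite Z \<Longrightarrow> \<forall>z\<in>Z. z < m \<Longrightarrow>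
    bethe q \<alpha> W (insert m Z) = (\<Sum>w\<in>W. first_coeff (of_real q) (phi q \<alpha> m) W w * bethe q \<alpha> (W - {w}) Z)"
  unfolding bethe_def by (simp add: parts_insert_max)

lemma bethe_singleton:
  assumes "finite W"
  shows "bethe q \<alpha> W {k} = of_real \<alpha> ^ (card W - 1) * lead_sum (of_real q) (phi q \<alpha> k) W"
proof -
  have "bethe q \<alpha> W {k} = (\<Sum>w\<in>W. first_coeff (of_real q) (phi q \<alpha> k) W w * of_real \<alpha> ^ (card W - 1))"
    using bethe_insert_max[of "{}" k q \<alpha> W] assms by (simp add: bethe_empty)
  then show ?thesis unfolding lead_sum_def by (simp add: sum_distrib_left mult.commute)
qed

lemma first_coeff_phi_free:
  assumes gen: "generic_set (of_real q) W" and w: "w \<in> W" and m: "m \<ge> 2"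
  shows "first_coeff (of_real q) (phi q \<alpha> (m + 1)) W w + of_real q * first_coeff (of_real q) (phi q \<alpha> (m - 1)) W w
      - (1 + of_real q) * first_coeff (of_real q) (phi q \<alpha> m) W w
    = energy (of_real q) w * first_coeff (of_real q) (phi q \<alpha> m) W w"
proof -
  let ?Q = "of_real q :: complex" and ?w' = "qinv (of_real q) w"
  have pt: "v \<noteq> 0" "v \<noteq> 1" "?Q * v \<noteq> 1" if "v \<in> {w, ?w'}" for v
    using generic_set_point[OF gen w that] by auto
  have free: "phi q \<alpha> (m + 1) v + ?Q * phi q \<alpha> (m - 1) v - (1 + ?Q) * phi q \<alpha> m v
      = energy ?Q w * phi q \<alpha> m v" if "v \<in> {w, ?w'}" for v
  proof -
    have "energy ?Q v = energy ?Q w"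
      using that energy_qinv[OF generic_setD(1)[OF gen] pt[of w]] by auto
    then show ?thesis using phi_free[OF m pt(2,3)[OF that]] by simp
  qed
  define P1 P2 where "P1 = scatt_prod ?Q w (W - {w})" and "P2 = scatt_prod ?Q ?w' (W - {w})"
  have "first_coeff ?Q (phi q \<alpha> (m + 1)) W w + ?Q * first_coeff ?Q (phi q \<alpha> (m - 1)) W w
      - (1 + ?Q) * first_coeff ?Q (phi q \<alpha> m) W w
    = (phi q \<alpha> (m + 1) w + ?Q * phi q \<alpha> (m - 1) w - (1 + ?Q) * phi q \<alpha> m w) * P1
      + (phi q \<alpha> (m + 1) ?w' + ?Q * phi q \<alpha> (m - 1) ?w' - (1 + ?Q) * phi q \<alpha> m ?w') * P2"
    unfolding first_coeff_def pair_sum_def P1_def P2_def by (simp add: algebra_simps)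
  also have "\<dots> = energy ?Q w * (phi q \<alpha> m w * P1 + phi q \<alpha> m ?w' * P2)"
    unfolding free[of w, OF insertI1] free[of ?w', OF insertI2[OF insertI1]] by (simp add: algebra_simps)
  also have "\<dots> = energy ?Q w * first_coeff ?Q (phi q \<alpha> m) W w"
    unfolding first_coeff_def pair_sum_def P1_def P2_def ..
  finally show ?thesis .
qed

lemma bethe_collision:
  fixes q \<alpha> :: real
  assumes gen: "generic_set (of_real q) W" and m: "m \<ge> 2" and Z: "finite Z" "\<forall>z\<in>Z. z < m - 1"
  defines "R k Y \<equiv> \<Sum>w\<in>W. first_coeff (of_real q) (phi q \<alpha> k) W w * bethe q \<alpha> (W - {w}) Y"
  shows "of_real q * (R (m - 1) (insert (m - 1) Z) - R m (insert (m - 1) Z))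
    + (R m (insert m Z) - R m (insert (m - 1) Z)) = 0"
proof -
  let ?Q = "of_real q :: complex" and ?p = "phi q \<alpha> (m - 1)"
  define G where "G a b = bethe q \<alpha> (W - {a} - {b}) Z" for a b
  have pm: "phi q \<alpha> m = (\<lambda>v. ?p v * step_factor ?Q v)"
    using phi_Suc[of "m - 1" q \<alpha>] m by (simp add: fun_eq_iff)
  have e1: "bethe q \<alpha> (W - {a}) (insert (m - 1) Z) = (\<Sum>b\<in>W - {a}. first_coeff ?Q ?p (W - {a}) b * G a b)" for a
    unfolding G_def using bethe_insert_max[OF Z] .
  have "\<forall>z\<in>Z. z < m" using Z(2) by auto
  then have e2: "bethe q \<alpha> (W - {a}) (insert m Z)
      = (\<Sum>b\<in>W - {a}. first_coeff ?Q (phi q \<alpha> m) (W - {a}) b * G a b)" for a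
    unfolding G_def using bethe_insert_max[OF Z(1)] by blast
  have "?Q * (R (m - 1) (insert (m - 1) Z) - R m (insert (m - 1) Z)) + (R m (insert m Z) - R m (insert (m - 1) Z))
     = (\<Sum>a\<in>W. \<Sum>b\<in>W - {a}. collision_coeff ?Q ?p W a b * G a b)"
    unfolding R_def e1 e2 pm collision_coeff_def
    by (simp add: sum_distrib_left sum_subtractf sum.distrib algebra_simps)
  also have "\<dots> = 0"
  proof (rule sum_offdiag_antisym[OF generic_setD(3)[OF gen]])
    fix a b assume ab: "a \<in> W" "b \<in> W" "a \<noteq> b"
    have "G b a = G a b" unfolding G_def by (metis Diff_insert2 insert_commute)
    then show "collision_coeff ?Q ?p W a b * G a b + collision_coeff ?Q ?p W b a * G b a = 0"
      using collision_coeff_antisym[OF gen ab] by (simp add: distrib_right[symmetric])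
  qed
  finally show ?thesis .
qed

section \<open>The eigenvalue equation\<close>

definition hop_term :: "'a::comm_ring_1 \<Rightarrow> (nat set \<Rightarrow> 'a) \<Rightarrow> nat set \<Rightarrow> nat \<Rightarrow> 'a" where
  "hop_term Q F y x =
     (if x + 1 \<notin> y then F (insert (x + 1) (y - {x})) - F y else 0)
   + (if 2 \<le> x \<and> x - 1 \<notin> y then Q * (F (insert (x - 1) (y - {x})) - F y) else 0)"

definition gen_action :: "'a::comm_ring_1 \<Rightarrow> 'a \<Rightarrow> (nat set \<Rightarrow> 'a) \<Rightarrow> nat set \<Rightarrow> 'a" where
  "gen_action Q A F y = (\<Sum>x\<in>y. hop_term Q F y x) + (if 1 \<notin> y then A * (F (insert 1 y) - F y) else 0)"

lemma gen_action_sum: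
  assumes "finite W"
  shows "gen_action Q A (\<lambda>Z. \<Sum>w\<in>W. c w * G w Z) y = (\<Sum>w\<in>W. c w * gen_action Q A (G w) y)"
proof -
  have hop: "hop_term Q (\<lambda>Z. \<Sum>w\<in>W. c w * G w Z) y x = (\<Sum>w\<in>W. c w * hop_term Q (G w) y x)" for x
    unfolding hop_term_def
    by (cases "x + 1 \<notin> y"; cases "2 \<le> x \<and> x - 1 \<notin> y")
      (simp_all only: if_True if_False, simp_all add: sum.distrib sum_subtractf sum_distrib_left algebra_simps)
  have "(\<Sum>x\<in>y. \<Sum>w\<in>W. c w * hop_term Q (G w) y x) = (\<Sum>w\<in>W. c w * (\<Sum>x\<in>y. hop_term Q (G w) y x))"
    by (subst sum.swap) (simp add: sum_distrib_left)
  then show ?thesis unfolding gen_action_def hop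
    by (simp add: sum.distrib sum_subtractf sum_distrib_left algebra_simps)
qed

text \<open>The correction term: for \<open>R\<close> a particle at \<open>m - 1\<close> may jump to \<open>m\<close>, which is occupied for
  \<open>F\<close>.\<close>

lemma hop_term_insert_max:
  assumes Y: "finite Y" "\<forall>z\<in>Y. z < m" and m: "m \<ge> 2" and x: "x \<in> Y"
    and FR: "\<And>Z. finite Z \<Longrightarrow> \<forall>z\<in>Z. z < m \<Longrightarrow> F (insert m Z) = R Z"
  shows "hop_term Q F (insert m Y) x
    = hop_term Q R Y x - (if x = m - 1 then R (insert m (Y - {x})) - R Y else 0)"
proof -
  have xm: "x < m" using Y(2) x by auto
  have FY: "F (insert m Y) = R Y" using FR[OF Y] .
  have left: "(if 2 \<le> x \<and> x - 1 \<notin> insert m Y then Q * (F (insert (x - 1) (insert m Y - {x})) - F (insert m Y)) else 0)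
      = (if 2 \<le> x \<and> x - 1 \<notin> Y then Q * (R (insert (x - 1) (Y - {x})) - R Y) else 0)"
  proof (cases "2 \<le> x \<and> x - 1 \<notin> Y")
    case True
    have "insert (x - 1) (insert m Y - {x}) = insert m (insert (x - 1) (Y - {x}))" using xm by auto
    moreover have "F (insert m (insert (x - 1) (Y - {x}))) = R (insert (x - 1) (Y - {x}))"
      by (rule FR) (use Y xm in auto)
    moreover have "x - 1 \<noteq> m" using xm by simp
    ultimately show ?thesis using True FY by simp
  next
    case False
    then show ?thesis using xm by auto
  qed
  show ?thesis
  proof (cases "x = m - 1")
    case True
    then have "x + 1 \<in> insert m Y" "x + 1 \<notin> Y" "x + 1 = m" using m Y(2) by auto
    then show ?thesis unfolding hop_term_def left using True by simp
  next
    case False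
    then have "x + 1 \<noteq> m" using xm by auto
    moreover have "insert (x + 1) (insert m Y - {x}) = insert m (insert (x + 1) (Y - {x}))" using xm by auto
    moreover have "F (insert m (insert (x + 1) (Y - {x}))) = R (insert (x + 1) (Y - {x}))"
      by (rule FR) (use Y xm \<open>x + 1 \<noteq> m\<close> in auto)
    ultimately show ?thesis unfolding hop_term_def left using False FY by simp
  qed
qed

lemma gen_action_insert_max:
  assumes Y: "finite Y" "\<forall>z\<in>Y. z < m" and m: "m \<ge> 2"
    and FR: "\<And>Z. finite Z \<Longrightarrow> \<forall>z\<in>Z. z < m \<Longrightarrow> F (insert m Z) = R Z"
  shows "gen_action Q A F (insert m Y) = hop_term Q F (insert m Y) m + gen_action Q A R Y
     - (if m - 1 \<in> Y then R (insert m (Y - {m - 1})) - R Y else 0)"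
proof -
  have mY: "m \<notin> Y" using Y(2) by auto
  have "hop_term Q F (insert m Y) x
      = hop_term Q R Y x - (if x = m - 1 then R (insert m (Y - {x})) - R Y else 0)" if "x \<in> Y" for x
    using hop_term_insert_max[where F = F and R = R, OF Y m that FR] .
  then have "(\<Sum>x\<in>Y. hop_term Q F (insert m Y) x)
      = (\<Sum>x\<in>Y. hop_term Q R Y x) - (\<Sum>x\<in>Y. if x = m - 1 then R (insert m (Y - {x})) - R Y else 0)"
    by (simp add: sum_subtractf)
  also have "(\<Sum>x\<in>Y. if x = m - 1 then R (insert m (Y - {x})) - R Y else 0)
      = (if m - 1 \<in> Y then R (insert m (Y - {m - 1})) - R Y else 0)"
    using Y(1) by (simp add: sum.delta)
  finally have hops: "(\<Sum>x\<in>Y. hop_term Q F (insert m Y) x) = (\<Sum>x\<in>Y. hop_term Q R Y x)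
      - (if m - 1 \<in> Y then R (insert m (Y - {m - 1})) - R Y else 0)" .
  have "insert 1 (insert m Y) = insert m (insert 1 Y)" by auto
  then have "F (insert 1 (insert m Y)) = R (insert 1 Y)" using FR[of "insert 1 Y"] Y m by auto
  moreover have "1 \<notin> insert m Y \<longleftrightarrow> 1 \<notin> Y" using m by auto
  ultimately have entry: "(if 1 \<notin> insert m Y then A * (F (insert 1 (insert m Y)) - F (insert m Y)) else 0)
      = (if 1 \<notin> Y then A * (R (insert 1 Y) - R Y) else 0)"
    using FR[OF Y] by simp
  show ?thesis
    unfolding gen_action_def entry using Y(1) mY hops by simp
qed

lemma gen_action_bethe_insert_max:
  fixes q \<alpha> :: real
  assumes gen: "generic_set (of_real q) W" and m: "m \<ge> 2" and Y: "finite Y" "\<forall>z\<in>Y. z < m"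
  defines "R k Z \<equiv> \<Sum>w\<in>W. first_coeff (of_real q) (phi q \<alpha> k) W w * bethe q \<alpha> (W - {w}) Z"
  shows "gen_action (of_real q) A (bethe q \<alpha> W) (insert m Y)
    = R (m + 1) Y + of_real q * R (m - 1) Y - (1 + of_real q) * R m Y + gen_action (of_real q) A (R m) Y"
proof -
  let ?Q = "of_real q :: complex"
  have FR: "bethe q \<alpha> W (insert k Z) = R k Z" if "finite Z" "\<forall>z\<in>Z. z < k" for k Z
    unfolding R_def using bethe_insert_max[OF that] .
  have split: "gen_action ?Q A (bethe q \<alpha> W) (insert m Y) = hop_term ?Q (bethe q \<alpha> W) (insert m Y) m
      + gen_action ?Q A (R m) Y - (if m - 1 \<in> Y then R m (insert m (Y - {m - 1})) - R m Y else 0)"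
    using gen_action_insert_max[where F = "bethe q \<alpha> W" and R = "R m", OF Y m FR] .
  have mY: "m \<notin> Y" "m + 1 \<notin> Y" "insert m Y - {m} = Y" using Y(2) by auto
  have "\<forall>z\<in>Y. z < m + 1" using Y(2) by auto
  then have right: "bethe q \<alpha> W (insert (m + 1) Y) = R (m + 1) Y" using FR[OF Y(1)] by blast
  have stay: "bethe q \<alpha> W (insert m Y) = R m Y" using FR[OF Y] .
  show ?thesis
  proof (cases "m - 1 \<in> Y")
    case False
    have "z < m - 1" if "z \<in> Y" for z using Y(2) that False by (cases "z = m - 1") auto
    then have "bethe q \<alpha> W (insert (m - 1) Y) = R (m - 1) Y" using FR[OF Y(1)] by blast
    then have "hop_term ?Q (bethe q \<alpha> W) (insert m Y) m = (R (m + 1) Y - R m Y) + ?Q * (R (m - 1) Y - R m Y)"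
      unfolding hop_term_def mY(3) using mY(1,2) m False right stay by simp
    then show ?thesis unfolding split using False by (simp add: algebra_simps)
  next
    case True
    define Z where "Z = Y - {m - 1}"
    have YZ: "Y = insert (m - 1) Z" unfolding Z_def using True by auto
    have Z: "finite Z" "\<forall>z\<in>Z. z < m - 1" unfolding Z_def using Y by auto
    have "hop_term ?Q (bethe q \<alpha> W) (insert m Y) m = R (m + 1) Y - R m Y"
      unfolding hop_term_def mY(3) using mY(1,2) m True right stay by simp
    moreover have "?Q * (R (m - 1) Y - R m Y) + (R m (insert m Z) - R m Y) = 0"
      using bethe_collision[OF gen m Z, of \<alpha>] unfolding R_def YZ[symmetric] .
    ultimately show ?thesis unfolding split using True Z_def by (simp add: algebra_simps)
  qed
qed

lemma bethe_eigen_step: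
  assumes gen: "generic_set (of_real q) W" and m: "m \<ge> 2" and Y: "finite Y" "\<forall>z\<in>Y. z < m"
    and IH: "\<And>w. w \<in> W \<Longrightarrow> gen_action (of_real q) (of_real \<alpha>) (bethe q \<alpha> (W - {w})) Y
      = ((\<Sum>u\<in>W - {w}. energy (of_real q) u) - of_real \<alpha>) * bethe q \<alpha> (W - {w}) Y"
  shows "gen_action (of_real q) (of_real \<alpha>) (bethe q \<alpha> W) (insert m Y)
    = ((\<Sum>u\<in>W. energy (of_real q) u) - of_real \<alpha>) * bethe q \<alpha> W (insert m Y)"
proof -
  let ?Q = "of_real q :: complex" and ?E = "\<lambda>U. \<Sum>u\<in>U. energy (of_real q) u"
  let ?c = "\<lambda>k w. first_coeff ?Q (phi q \<alpha> k) W w" and ?B = "\<lambda>w. bethe q \<alpha> (W - {w}) Y"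
  have fin: "finite W" using generic_setD(3)[OF gen] .
  have "(\<Sum>w\<in>W. ?c (m + 1) w * ?B w) + ?Q * (\<Sum>w\<in>W. ?c (m - 1) w * ?B w) - (1 + ?Q) * (\<Sum>w\<in>W. ?c m w * ?B w)
      = (\<Sum>w\<in>W. (?c (m + 1) w + ?Q * ?c (m - 1) w - (1 + ?Q) * ?c m w) * ?B w)"
    by (simp add: sum_distrib_left sum_subtractf sum.distrib algebra_simps)
  also have "\<dots> = (\<Sum>w\<in>W. energy ?Q w * ?c m w * ?B w)"
    using first_coeff_phi_free[OF gen _ m] by (intro sum.cong) auto
  finally have free: "(\<Sum>w\<in>W. ?c (m + 1) w * ?B w) + ?Q * (\<Sum>w\<in>W. ?c (m - 1) w * ?B w)
      - (1 + ?Q) * (\<Sum>w\<in>W. ?c m w * ?B w) = (\<Sum>w\<in>W. energy ?Q w * ?c m w * ?B w)" .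
  have rec: "gen_action ?Q (of_real \<alpha>) (\<lambda>Z. \<Sum>w\<in>W. ?c m w * bethe q \<alpha> (W - {w}) Z) Y
      = (\<Sum>w\<in>W. ?c m w * ((?E (W - {w}) - of_real \<alpha>) * ?B w))"
    unfolding gen_action_sum[OF fin] using IH by simp
  have "(\<Sum>w\<in>W. energy ?Q w * ?c m w * ?B w) + (\<Sum>w\<in>W. ?c m w * ((?E (W - {w}) - of_real \<alpha>) * ?B w))
      = (\<Sum>w\<in>W. (?E (W - {w}) + energy ?Q w - of_real \<alpha>) * (?c m w * ?B w))"
    by (simp add: sum.distrib[symmetric] algebra_simps)
  also have "\<dots> = (?E W - of_real \<alpha>) * (\<Sum>w\<in>W. ?c m w * ?B w)"
    unfolding sum_distrib_left by (rule sum.cong) (simp_all add: fin sum.remove)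
  also have "\<dots> = (?E W - of_real \<alpha>) * bethe q \<alpha> W (insert m Y)"
    using bethe_insert_max[OF Y] by simp
  finally show ?thesis
    unfolding gen_action_bethe_insert_max[OF gen m Y] free rec .
qed

lemma bethe_eigen_empty:
  assumes "generic_set (of_real q) W"
  shows "gen_action (of_real q) (of_real \<alpha>) (bethe q \<alpha> W) {}
    = ((\<Sum>u\<in>W. energy (of_real q) u) - of_real \<alpha>) * bethe q \<alpha> W {}"
proof -
  have fin: "finite W" using generic_setD(3)[OF assms] .
  have "of_real \<alpha> * bethe q \<alpha> W {1} = of_real \<alpha> ^ card W * (\<Sum>u\<in>W. energy (of_real q) u)"
  proof (cases "W = {}")
    case False
    then have "card W = Suc (card W - 1)" using fin by (simp add: card_gt_0_iff)
    then show ?thesis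
      unfolding bethe_singleton[OF fin] lead_sum_phi_one[OF assms] by (metis mult.assoc power_Suc)
  qed (simp add: bethe_singleton lead_sum_def)
  then show ?thesis unfolding gen_action_def bethe_empty by (simp add: algebra_simps)
qed

lemma bethe_eigen_one:
  assumes "generic_set (of_real q) W"
  shows "gen_action (of_real q) (of_real \<alpha>) (bethe q \<alpha> W) {1}
    = ((\<Sum>u\<in>W. energy (of_real q) u) - of_real \<alpha>) * bethe q \<alpha> W {1}"
proof -
  have fin: "finite W" using generic_setD(3)[OF assms] .
  have "gen_action (of_real q) (of_real \<alpha>) (bethe q \<alpha> W) {1} = bethe q \<alpha> W {2} - bethe q \<alpha> W {1}"
    unfolding gen_action_def hop_term_def by (simp add: numeral_2_eq_2)
  then show ?thesis
    unfolding bethe_singleton[OF fin] lead_sum_phi_one[OF assms] lead_sum_phi_two[OF assms]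
    by (simp add: algebra_simps power2_eq_square)
qed

theorem bethe_eigenfunction:
  assumes "generic_set (of_real q) W" "finite Y" "0 \<notin> Y"
  shows "gen_action (of_real q) (of_real \<alpha>) (bethe q \<alpha> W) Y
    = ((\<Sum>u\<in>W. energy (of_real q) u) - of_real \<alpha>) * bethe q \<alpha> W Y"
  using assms
proof (induction "card Y" arbitrary: Y W rule: less_induct)
  case less
  show ?case
  proof (cases "Y = {}")
    case True
    then show ?thesis using bethe_eigen_empty[OF less.prems(1)] by simp
  next
    case False
    define m where "m = Max Y"
    have mY: "m \<in> Y" "\<forall>z\<in>Y. z \<le> m" unfolding m_def using less.prems(2) False by auto
    have "m \<noteq> 0" using mY(1) less.prems(3) by metis
    then consider "m = 1" | "m \<ge> 2" by linarith
    then show ?thesis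
    proof cases
      case 1
      then have "Y = {1}" using mY less.prems(3) by (auto simp: le_Suc_eq)
      then show ?thesis using bethe_eigen_one[OF less.prems(1)] by simp
    next
      case 2
      define Y' where "Y' = Y - {m}"
      have Y: "Y = insert m Y'" "finite Y'" "\<forall>z\<in>Y'. z < m" "card Y' < card Y"
        unfolding Y'_def using mY less.prems(2) card_Diff1_less[OF less.prems(2) mY(1)] by auto
      have "0 \<notin> Y'" unfolding Y'_def using less.prems(3) by auto
      then show ?thesis
        unfolding Y(1) using Y(2,3) less.hyps[OF Y(4) generic_set_subset[OF less.prems(1)] Y(2)]
        by (intro bethe_eigen_step[OF less.prems(1) 2]) auto
    qed
  qed
qed

section \<open>The generator matrix\<close>

definition jump :: "nat set \<Rightarrow> nat \<Rightarrow> nat \<Rightarrow> nat set" where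
  "jump y x x' = insert x' (y - {x})"

definition right_movers :: "nat set \<Rightarrow> nat set" where
  "right_movers y = {x\<in>y. x + 1 \<notin> y}"

definition left_movers :: "nat set \<Rightarrow> nat set" where
  "left_movers y = {x\<in>y. 2 \<le> x \<and> x - 1 \<notin> y}"

definition successors :: "nat set \<Rightarrow> nat set set" where
  "successors y = (\<lambda>x. jump y x (x + 1)) ` right_movers y \<union> (\<lambda>x. jump y x (x - 1)) ` left_movers y
    \<union> (if 1 \<notin> y then {insert 1 y} else {})"

lemma jump_eq_jumpD:
  assumes "x \<in> y" "x' \<notin> y" "u \<in> y" "u' \<notin> y" "jump y x x' = jump y u u'"
  shows "x = u" "x' = u'"
proof -
  have "x \<notin> jump y x x'" using assms(1,2) unfolding jump_def by auto
  then show "x = u" using assms(1,5) unfolding jump_def by auto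
  then show "x' = u'" using assms(2,5) unfolding jump_def by auto
qed

lemma jump_neq_insert_one: "x \<in> y \<Longrightarrow> x' \<notin> y \<Longrightarrow> jump y x x' \<noteq> insert 1 y"
  unfolding jump_def by auto

lemma jump_neq_self: "x' \<notin> y \<Longrightarrow> jump y x x' \<noteq> y"
  unfolding jump_def by auto

lemma rate_jump_right:
  assumes "x \<in> right_movers y"
  shows "rate q \<alpha> y (jump y x (x + 1)) = 1"
proof -
  have x: "x \<in> y" "x + 1 \<notin> y" using assms unfolding right_movers_def by auto
  have "\<not> (\<exists>u\<in>y. u \<ge> 2 \<and> u - 1 \<notin> y \<and> jump y x (x + 1) = jump y u (u - 1))"
    using jump_eq_jumpD[OF x] by force
  moreover have "jump y x (x + 1) \<noteq> insert 1 y" using jump_neq_insert_one[OF x] .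
  ultimately show ?thesis using x unfolding rate_def jump_def[symmetric] by auto
qed

lemma rate_jump_left:
  assumes "x \<in> left_movers y"
  shows "rate q \<alpha> y (jump y x (x - 1)) = q"
proof -
  have x: "x \<in> y" "x - 1 \<notin> y" "x \<ge> 2" using assms unfolding left_movers_def by auto
  have "\<not> (\<exists>u\<in>y. u + 1 \<notin> y \<and> jump y x (x - 1) = jump y u (u + 1))"
    using jump_eq_jumpD[OF x(1,2)] x(3) by force
  moreover have "jump y x (x - 1) \<noteq> insert 1 y" using jump_neq_insert_one[OF x(1,2)] .
  ultimately show ?thesis using x unfolding rate_def jump_def[symmetric] by auto
qed

lemma rate_entry:
  assumes "1 \<notin> y"
  shows "rate q \<alpha> y (insert 1 y) = \<alpha>"
proof -
  have "\<not> (\<exists>x\<in>y. x + 1 \<notin> y \<and> insert 1 y = jump y x (x + 1))"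
    "\<not> (\<exists>x\<in>y. x \<ge> 2 \<and> x - 1 \<notin> y \<and> insert 1 y = jump y x (x - 1))"
    using jump_neq_insert_one by metis+
  moreover have "1 \<notin> y \<and> insert 1 y = insert 1 y" using assms by simp
  ultimately show ?thesis unfolding rate_def jump_def[symmetric] by (simp only: if_P if_not_P) simp
qed

lemma rate_nonzero_successors:
  assumes "rate q \<alpha> y z \<noteq> 0"
  shows "z \<in> successors y"
proof -
  define R L E where "R = (\<exists>x\<in>y. x + 1 \<notin> y \<and> z = jump y x (x + 1))"
    and "L = (\<exists>x\<in>y. x \<ge> 2 \<and> x - 1 \<notin> y \<and> z = jump y x (x - 1))" and "E = (1 \<notin> y \<and> z = insert 1 y)"
  have "rate q \<alpha> y z = (if R then 1 else 0) + (if L then q else 0) + (if E then \<alpha> else 0)"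
    unfolding rate_def R_def L_def E_def jump_def ..
  then have "R \<or> L \<or> E" using assms by (auto split: if_splits)
  moreover have "R \<Longrightarrow> z \<in> (\<lambda>x. jump y x (x + 1)) ` right_movers y"
    unfolding R_def right_movers_def by blast
  moreover have "L \<Longrightarrow> z \<in> (\<lambda>x. jump y x (x - 1)) ` left_movers y"
    unfolding L_def left_movers_def by blast
  ultimately show ?thesis unfolding successors_def E_def by auto
qed

lemma finite_successors: "finite y \<Longrightarrow> finite (successors y)"
  unfolding successors_def right_movers_def left_movers_def by auto

lemma self_notin_successors: "y \<notin> successors y"
  using jump_neq_self unfolding successors_def right_movers_def left_movers_def by auto

lemma successors_config:
  assumes "is_config y" "z \<in> successors y"
  shows "is_config z"
proof -
  have y: "finite y" "0 \<notin> y" using assms(1) unfolding is_config_def by auto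
  have "(\<exists>x. z = jump y x (x + 1)) \<or> (\<exists>x\<ge>2. z = jump y x (x - 1)) \<or> z = insert 1 y"
    using assms(2) unfolding successors_def left_movers_def by (auto split: if_splits)
  then show ?thesis
  proof (elim disjE exE conjE)
    fix x assume "z = jump y x (x + 1)"
    then show ?thesis using y unfolding is_config_def jump_def by simp
  next
    fix x assume "x \<ge> 2" "z = jump y x (x - 1)"
    then show ?thesis using y unfolding is_config_def jump_def by simp
  next
    assume "z = insert 1 y"
    then show ?thesis using y unfolding is_config_def by simp
  qed
qed

lemma sum_successors:
  assumes "finite y"
  shows "sum g (successors y) = (\<Sum>x\<in>right_movers y. g (jump y x (x + 1)))
    + (\<Sum>x\<in>left_movers y. g (jump y x (x - 1))) + (if 1 \<notin> y then g (insert 1 y) else 0)"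
proof -
  let ?R = "(\<lambda>x. jump y x (x + 1)) ` right_movers y" and ?L = "(\<lambda>x. jump y x (x - 1)) ` left_movers y"
  have R: "x \<in> y" "x + 1 \<notin> y" if "x \<in> right_movers y" for x
    using that unfolding right_movers_def by auto
  have L: "x \<in> y" "x - 1 \<notin> y" "x \<ge> 2" if "x \<in> left_movers y" for x
    using that unfolding left_movers_def by auto
  have inj: "inj_on (\<lambda>x. jump y x (x + 1)) (right_movers y)" "inj_on (\<lambda>x. jump y x (x - 1)) (left_movers y)"
  proof (rule_tac[!] inj_onI)
    fix x u assume "x \<in> right_movers y" "u \<in> right_movers y" "jump y x (x + 1) = jump y u (u + 1)"
    from jump_eq_jumpD(1)[OF R(1,2)[OF this(1)] R(1,2)[OF this(2)] this(3)] show "x = u" .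
  next
    fix x u assume "x \<in> left_movers y" "u \<in> left_movers y" "jump y x (x - 1) = jump y u (u - 1)"
    from jump_eq_jumpD(1)[OF L(1,2)[OF this(1)] L(1,2)[OF this(2)] this(3)] show "x = u" .
  qed
  have fin: "finite (right_movers y)" "finite (left_movers y)"
    using assms unfolding right_movers_def left_movers_def by auto
  have "jump y x (x + 1) \<noteq> jump y u (u - 1)" if "x \<in> right_movers y" "u \<in> left_movers y" for x u
  proof
    assume "jump y x (x + 1) = jump y u (u - 1)"
    from jump_eq_jumpD[OF R(1,2)[OF that(1)] L(1,2)[OF that(2)] this] show False by simp
  qed
  moreover have "jump y x (x + 1) \<noteq> insert 1 y" if "x \<in> right_movers y" for x
    using jump_neq_insert_one[OF R(1,2)[OF that]] .
  moreover have "jump y x (x - 1) \<noteq> insert 1 y" if "x \<in> left_movers y" for x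
    using jump_neq_insert_one[OF L(1,2)[OF that]] .
  ultimately have disj: "?R \<inter> ?L = {}" "insert 1 y \<notin> ?R \<union> ?L" by blast+
  have "sum g (successors y) = sum g ?R + sum g ?L + sum g (if 1 \<notin> y then {insert 1 y} else {})"
    unfolding successors_def using fin disj by (simp add: sum.union_disjoint del: Un_iff)
  then show ?thesis unfolding sum.reindex[OF inj(1)] sum.reindex[OF inj(2)] comp_def by simp
qed

lemma gen_action_eq_sum_successors:
  assumes "finite y"
  shows "gen_action (of_real q) (of_real \<alpha>) F y = (\<Sum>z\<in>successors y. of_real (rate q \<alpha> y z) * (F z - F y))"
proof -
  have "(\<Sum>x\<in>y. hop_term (of_real q) F y x)
      = (\<Sum>x\<in>y. if x + 1 \<notin> y then F (jump y x (x + 1)) - F y else 0)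
        + (\<Sum>x\<in>y. if 2 \<le> x \<and> x - 1 \<notin> y then of_real q * (F (jump y x (x - 1)) - F y) else 0)"
    unfolding hop_term_def jump_def by (simp only: sum.distrib)
  also have "\<dots> = (\<Sum>x\<in>right_movers y. F (jump y x (x + 1)) - F y)
      + (\<Sum>x\<in>left_movers y. of_real q * (F (jump y x (x - 1)) - F y))"
    unfolding right_movers_def left_movers_def by (simp only: sum.inter_filter[OF assms])
  finally have hops: "(\<Sum>x\<in>y. hop_term (of_real q) F y x)
      = (\<Sum>x\<in>right_movers y. F (jump y x (x + 1)) - F y)
        + (\<Sum>x\<in>left_movers y. of_real q * (F (jump y x (x - 1)) - F y))" .
  show ?thesis
    unfolding sum_successors[OF assms] gen_action_def hops using rate_jump_right rate_jump_left rate_entry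
    by simp
qed

lemma generator_sum_eq_gen_action:
  fixes F :: "nat set \<Rightarrow> complex"
  assumes y: "is_config y"
  shows "(\<Sum>y'\<in>{y'. is_config y' \<and> gen q \<alpha> y y' \<noteq> 0}. of_real (gen q \<alpha> y y') * F y')
    = gen_action (of_real q) (of_real \<alpha>) F y"
proof -
  have fin: "finite y" using y unfolding is_config_def by simp
  let ?S = "successors y"
  have gen_succ: "gen q \<alpha> y z = rate q \<alpha> y z" if "z \<in> ?S" for z
    using that self_notin_successors unfolding gen_def by auto
  have "gen q \<alpha> y y = - (\<Sum>z\<in>?S. rate q \<alpha> y z)"
  proof -
    have "(\<Sum>z\<in>{z. is_config z \<and> z \<noteq> y \<and> rate q \<alpha> y z \<noteq> 0}. rate q \<alpha> y z) = (\<Sum>z\<in>?S. rate q \<alpha> y z)"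
      by (rule sum.mono_neutral_left[OF finite_successors[OF fin]])
        (use rate_nonzero_successors successors_config[OF y] self_notin_successors in auto)
    then show ?thesis unfolding gen_def by simp
  qed
  have "(\<Sum>y'\<in>{y'. is_config y' \<and> gen q \<alpha> y y' \<noteq> 0}. of_real (gen q \<alpha> y y') * F y')
      = (\<Sum>y'\<in>insert y ?S. of_real (gen q \<alpha> y y') * F y')"
    by (rule sum.mono_neutral_left)
      (use finite_successors[OF fin] rate_nonzero_successors successors_config[OF y] y
        in \<open>auto simp: gen_def split: if_splits\<close>)
  also have "\<dots> = of_real (gen q \<alpha> y y) * F y + (\<Sum>z\<in>?S. of_real (rate q \<alpha> y z) * F z)"
    using finite_successors[OF fin] self_notin_successors gen_succ by simp
  also have "\<dots> = (\<Sum>z\<in>?S. of_real (rate q \<alpha> y z) * (F z - F y))"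
    unfolding \<open>gen q \<alpha> y y = _\<close> by (simp add: sum_distrib_right right_diff_distrib sum_subtractf)
  finally show ?thesis unfolding gen_action_eq_sum_successors[OF fin] .
qed

section \<open>Signed permutations and the normalisation\<close>

text \<open>Signed permutations in list form: the entry \<open>(i, s)\<close> at position \<open>k\<close> puts \<open>w\<^sub>i\<close> (if \<open>s\<close>)
  or \<open>w\<^sub>-\<^sub>i\<close> into the \<open>k\<close>-th argument.\<close>

definition signed_lists :: "nat set \<Rightarrow> (nat \<times> bool) list set" where
  "signed_lists I = {pl. distinct (map fst pl) \<and> set (map fst pl) = I}"

definition signed_val :: "real \<Rightarrow> (nat \<Rightarrow> complex) \<Rightarrow> nat \<times> bool \<Rightarrow> complex" where
  "signed_val q w p = (if snd p then w (fst p) else qinv (of_real q) (w (fst p)))"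

primrec scatt_list :: "'a::field \<Rightarrow> 'a list \<Rightarrow> 'a" where
  "scatt_list Q [] = 1"
| "scatt_list Q (v # vs) = prod_list (map (scatt Q v) vs) * scatt_list Q vs"

fun phi_list :: "real \<Rightarrow> real \<Rightarrow> nat list \<Rightarrow> complex list \<Rightarrow> complex" where
  "phi_list q \<alpha> (y # ys) (v # vs) = phi q \<alpha> y v * phi_list q \<alpha> ys vs"
| "phi_list q \<alpha> _ _ = 1"

definition head_weight :: "real \<Rightarrow> real \<Rightarrow> nat list \<Rightarrow> complex \<Rightarrow> complex" where
  "head_weight q \<alpha> ys = (case ys of [] \<Rightarrow> (\<lambda>_. 1) | y # _ \<Rightarrow> phi q \<alpha> y)"

definition bethe_sum :: "real \<Rightarrow> real \<Rightarrow> (nat \<Rightarrow> complex) \<Rightarrow> nat set \<Rightarrow> nat list \<Rightarrow> complex" where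
  "bethe_sum q \<alpha> w I ys = (\<Sum>pl\<in>signed_lists I.
     scatt_list (of_real q) (map (signed_val q w) pl) * phi_list q \<alpha> ys (map (signed_val q w) pl))"

lemma phi_list_Cons: "phi_list q \<alpha> ys (v # vs) = head_weight q \<alpha> ys v * phi_list q \<alpha> (tl ys) vs"
  unfolding head_weight_def by (cases ys) simp_all

lemma signed_lists_empty: "signed_lists {} = {[]}"
  unfolding signed_lists_def by auto

lemma length_signed_lists: "pl \<in> signed_lists I \<Longrightarrow> length pl = card I"
  unfolding signed_lists_def using distinct_card by fastforce

lemma finite_signed_lists:
  assumes "finite I"
  shows "finite (signed_lists I)"
proof (rule finite_subset)
  show "signed_lists I \<subseteq> {xs. set xs \<subseteq> I \<times> UNIV \<and> length xs = card I}"
    using length_signed_lists unfolding signed_lists_def by force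
  show "finite {xs. set xs \<subseteq> I \<times> (UNIV :: bool set) \<and> length xs = card I}"
    using finite_lists_length_eq[of "I \<times> (UNIV :: bool set)" "card I"] assms by simp
qed

lemma signed_lists_rec:
  assumes "I \<noteq> {}"
  shows "signed_lists I = (\<Union>p\<in>I \<times> UNIV. (\<lambda>pl. p # pl) ` signed_lists (I - {fst p}))"
proof (intro equalityI subsetI)
  fix pl assume pl: "pl \<in> signed_lists I"
  then obtain i b pl' where e: "pl = (i, b) # pl'" using assms unfolding signed_lists_def by (cases pl) auto
  then have "(i, b) \<in> I \<times> UNIV" "pl' \<in> signed_lists (I - {i})"
    using pl unfolding signed_lists_def by (auto simp: image_iff)
  then show "pl \<in> (\<Union>p\<in>I \<times> UNIV. (\<lambda>pl. p # pl) ` signed_lists (I - {fst p}))" unfolding e by force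
next
  fix pl assume "pl \<in> (\<Union>p\<in>I \<times> UNIV. (\<lambda>pl. p # pl) ` signed_lists (I - {fst p}))"
  then obtain p pl' where "p \<in> I \<times> UNIV" "pl' \<in> signed_lists (I - {fst p})" "pl = p # pl'" by blast
  then show "pl \<in> signed_lists I" unfolding signed_lists_def by auto
qed

lemma sum_signed_lists_rec:
  assumes "finite I" "I \<noteq> {}"
  shows "(\<Sum>pl\<in>signed_lists I. g pl)
    = (\<Sum>i\<in>I. (\<Sum>pl\<in>signed_lists (I - {i}). g ((i, True) # pl) + g ((i, False) # pl)))"
proof -
  have fin: "finite (I \<times> (UNIV :: bool set))" using assms(1) by simp
  have "(\<Sum>pl\<in>signed_lists I. g pl) = (\<Sum>p\<in>I \<times> UNIV. \<Sum>pl\<in>signed_lists (I - {fst p}). g (p # pl))"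
    unfolding signed_lists_rec[OF assms(2)]
    by (subst sum.UNION_disjoint[OF fin]) (auto simp: assms(1) finite_signed_lists sum.reindex)
  also have "\<dots> = (\<Sum>i\<in>I. \<Sum>b\<in>UNIV. \<Sum>pl\<in>signed_lists (I - {i}). g ((i, b) # pl))"
    using sum.cartesian_product[of "\<lambda>i b. \<Sum>pl\<in>signed_lists (I - {i}). g ((i, b) # pl)" "UNIV :: bool set" I]
    by (simp add: case_prod_beta)
  also have "\<dots> = (\<Sum>i\<in>I. (\<Sum>pl\<in>signed_lists (I - {i}). g ((i, True) # pl) + g ((i, False) # pl)))"
    by (simp add: UNIV_bool sum.distrib add.commute)
  finally show ?thesis .
qed

lemma prod_list_scatt_signed_lists:
  assumes "pl \<in> signed_lists J" "\<forall>j\<in>J. w j \<noteq> 0" "q \<noteq> 0"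
  shows "prod_list (map (scatt (of_real q) v \<circ> signed_val q w) pl) = (\<Prod>j\<in>J. scatt (of_real q) v (w j))"
proof -
  have Q0: "(of_real q :: complex) \<noteq> 0" using assms(3) by simp
  have d: "distinct (map fst pl)" and st: "set (map fst pl) = J"
    using assms(1) unfolding signed_lists_def by auto
  have "map (scatt (of_real q) v \<circ> signed_val q w) pl = map (\<lambda>j. scatt (of_real q) v (w j)) (map fst pl)"
    unfolding map_map
  proof (rule map_cong[OF refl])
    fix p assume "p \<in> set pl"
    then have "w (fst p) \<noteq> 0" using st assms(2) by auto
    then show "(scatt (of_real q) v \<circ> signed_val q w) p = ((\<lambda>j. scatt (of_real q) v (w j)) \<circ> fst) p"
      unfolding signed_val_def using scatt_qinv[OF Q0] by auto
  qed
  then have "prod_list (map (scatt (of_real q) v \<circ> signed_val q w) pl)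
      = prod_list (map (\<lambda>j. scatt (of_real q) v (w j)) (map fst pl))"
    by (rule arg_cong)
  also have "\<dots> = (\<Prod>j\<in>J. scatt (of_real q) v (w j))"
    using prod.distinct_set_conv_list[OF d, of "\<lambda>j. scatt (of_real q) v (w j)"] st by simp
  finally show ?thesis .
qed

lemma bethe_sum_rec:
  assumes fin: "finite I" and ne: "I \<noteq> {}" and inj: "inj_on w I" and nz: "\<forall>j\<in>I. w j \<noteq> 0"
    and q: "q \<noteq> 0"
  shows "bethe_sum q \<alpha> w I ys
    = (\<Sum>i\<in>I. first_coeff (of_real q) (head_weight q \<alpha> ys) (w ` I) (w i) * bethe_sum q \<alpha> w (I - {i}) (tl ys))"
  unfolding bethe_sum_def sum_signed_lists_rec[OF fin ne]
proof (rule sum.cong[OF refl])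
  fix i assume i: "i \<in> I"
  let ?Q = "of_real q :: complex" and ?v = "signed_val q w" and ?h = "head_weight q \<alpha> ys"
  have img: "w ` I - {w i} = w ` (I - {i})" using inj i by (auto simp: inj_on_def)
  have P: "prod_list (map (scatt ?Q v \<circ> ?v) pl) = scatt_prod ?Q v (w ` I - {w i})"
    if "pl \<in> signed_lists (I - {i})" for v pl
    using prod_list_scatt_signed_lists[where v = v, OF that _ q] nz prod.reindex[of w "I - {i}" "scatt ?Q v"] inj
    unfolding img scatt_prod_def by (simp add: inj_on_diff)
  have "?v (i, True) = w i" "?v (i, False) = qinv ?Q (w i)" unfolding signed_val_def by simp_all
  then show "(\<Sum>pl\<in>signed_lists (I - {i}).
        scatt_list ?Q (map ?v ((i, True) # pl)) * phi_list q \<alpha> ys (map ?v ((i, True) # pl))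
      + scatt_list ?Q (map ?v ((i, False) # pl)) * phi_list q \<alpha> ys (map ?v ((i, False) # pl)))
    = first_coeff ?Q ?h (w ` I) (w i) * (\<Sum>pl\<in>signed_lists (I - {i}).
        scatt_list ?Q (map ?v pl) * phi_list q \<alpha> (tl ys) (map ?v pl))"
    unfolding first_coeff_def pair_sum_def sum_distrib_left
    by (intro sum.cong refl) (simp add: P phi_list_Cons algebra_simps)
qed

lemma power_neq_one: "(q::real) > 0 \<Longrightarrow> q \<noteq> 1 \<Longrightarrow> i > 0 \<Longrightarrow> q ^ i \<noteq> 1"
  by (metis less_imp_le power_eq_imp_eq_base power_one zero_le_one)

lemma Vconst_factor_nonzero:
  fixes q :: real
  assumes "q > 0" "q \<noteq> 1" "i > 0"
  shows "(1 - q ^ i) * (1 + q ^ (i - 1)) \<noteq> 0"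
  using power_neq_one[OF assms] assms(1) by (simp, smt (verit) zero_less_power)

lemma Vconst_nonzero:
  assumes "q > 0" "q \<noteq> 1"
  shows "Vconst q n \<noteq> 0"
  using Vconst_factor_nonzero[OF assms] assms unfolding Vconst_def by simp

lemma Vconst_Suc:
  assumes "q > 0" "q \<noteq> 1"
  shows "Vconst q (Suc k) * ((1 - q ^ Suc k) * (1 + q ^ k)) = Vconst q k * (q ^ k * (1 - q))"
proof -
  define P where "P = (\<Prod>i=1..k. (1 - q ^ i) * (1 + q ^ (i - 1)))"
  define D where "D = (1 - q ^ Suc k) * (1 + q ^ k)"
  have "P \<noteq> 0" unfolding P_def using Vconst_factor_nonzero[OF assms] by simp
  moreover have "D \<noteq> 0" unfolding D_def using Vconst_factor_nonzero[OF assms, of "Suc k"] by simp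
  moreover have "Suc k choose 2 = (k choose 2) + k"
    using binomial_Suc_Suc[of k 1] by (simp add: numeral_2_eq_2)
  moreover have "(\<Prod>i=1..Suc k. (1 - q ^ i) * (1 + q ^ (i - 1))) = P * D"
    unfolding P_def D_def by (simp add: prod.nat_ivl_Suc')
  ultimately show ?thesis unfolding Vconst_def P_def[symmetric] D_def[symmetric]
    by (simp add: power_add field_simps)
qed

lemma bethe_sum_nil:
  assumes q: "q > 0" and I: "finite I" "inj_on w I" "generic_set (of_real q) (w ` I)"
  shows "of_real (Vconst q (card I)) * bethe_sum q \<alpha> w I [] = 1"
  using I
proof (induction "card I" arbitrary: I)
  case 0
  then show ?case by (simp add: bethe_sum_def signed_lists_empty Vconst_def numeral_2_eq_2)
next
  case (Suc n I)
  let ?Q = "of_real q :: complex"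
  have q1: "q \<noteq> 1" using generic_setD(2)[OF Suc.prems(3)] by auto
  have V: "(of_real (Vconst q n) :: complex) \<noteq> 0" using Vconst_nonzero[OF q q1] by simp
  have ne: "I \<noteq> {}" using Suc.hyps(2) by auto
  have nz: "\<forall>j\<in>I. w j \<noteq> 0" using generic_set_point(1)[OF Suc.prems(3)] by blast
  have IH: "bethe_sum q \<alpha> w (I - {i}) [] = 1 / of_real (Vconst q n)" if "i \<in> I" for i
  proof -
    have "n = card (I - {i})" using Suc.hyps(2) Suc.prems(1) that by simp
    moreover have "generic_set (of_real q) (w ` (I - {i}))"
      using generic_set_subset[OF Suc.prems(3) image_mono[of "I - {i}" I w]] by simp
    ultimately have "of_real (Vconst q n) * bethe_sum q \<alpha> w (I - {i}) [] = 1"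
      using Suc.hyps(1)[of "I - {i}"] Suc.prems(1,2) by (simp add: inj_on_diff)
    then show ?thesis using V by (simp add: field_simps)
  qed
  have "bethe_sum q \<alpha> w I [] = (\<Sum>i\<in>I. first_coeff ?Q (\<lambda>_. 1) (w ` I) (w i) * bethe_sum q \<alpha> w (I - {i}) [])"
    using bethe_sum_rec[where ys = "[]" and \<alpha> = \<alpha>, OF Suc.prems(1) ne Suc.prems(2) nz] q
    by (simp add: head_weight_def)
  also have "\<dots> = (\<Sum>i\<in>I. first_coeff ?Q (\<lambda>_. 1) (w ` I) (w i)) / of_real (Vconst q n)"
    using IH by (simp add: sum_divide_distrib)
  also have "(\<Sum>i\<in>I. first_coeff ?Q (\<lambda>_. 1) (w ` I) (w i)) = lead_sum ?Q (\<lambda>_. 1) (w ` I)"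
    unfolding lead_sum_def using sum.reindex[OF Suc.prems(2), of "first_coeff ?Q (\<lambda>_. 1) (w ` I)"] by simp
  also have "\<dots> = (1 - ?Q ^ Suc n) * (1 + ?Q ^ n) / (?Q ^ n * (1 - ?Q))"
    using lead_sum_one[OF Suc.prems(3), of n] card_image[OF Suc.prems(2)] Suc.hyps(2) by simp
  finally have "of_real (Vconst q (Suc n)) * bethe_sum q \<alpha> w I []
      = of_real (Vconst q (Suc n) * ((1 - q ^ Suc n) * (1 + q ^ n))) / (?Q ^ n * (1 - ?Q) * of_real (Vconst q n))"
    by simp
  also have "\<dots> = 1"
    unfolding Vconst_Suc[OF q q1] using V q q1 by simp
  finally show ?case using Suc.hyps(2) by simp
qed

lemma bethe_list_eq_bethe_sum:
  assumes q: "q > 0" and I: "finite I" "inj_on w I" "generic_set (of_real q) (w ` I)"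
    and len: "length ys \<le> card I"
  shows "of_real (Vconst q (card I - length ys) * \<alpha> ^ (card I - length ys)) * bethe_sum q \<alpha> w I ys
    = bethe_list q \<alpha> (w ` I) ys"
  using I len
proof (induction ys arbitrary: I)
  case Nil
  then show ?case using bethe_sum_nil[OF q Nil.prems(1-3), of \<alpha>] card_image[OF Nil.prems(2)]
    by (simp add: algebra_simps)
next
  case (Cons y ys I)
  let ?c = "of_real (Vconst q (card I - length (y # ys)) * \<alpha> ^ (card I - length (y # ys))) :: complex"
  have ne: "I \<noteq> {}" using Cons.prems(1,4) by auto
  have nz: "\<forall>j\<in>I. w j \<noteq> 0" using generic_set_point(1)[OF Cons.prems(3)] by blast
  have IH: "?c * bethe_sum q \<alpha> w (I - {i}) ys = bethe_list q \<alpha> (w ` I - {w i}) ys" if i: "i \<in> I" for i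
  proof -
    have "card (I - {i}) - length ys = card I - length (y # ys)" using Cons.prems(1) i by simp
    moreover have "w ` I - {w i} = w ` (I - {i})" using Cons.prems(2) i by (auto simp: inj_on_def)
    ultimately show ?thesis
      using Cons.IH[of "I - {i}"] Cons.prems i
        generic_set_subset[OF Cons.prems(3) image_mono[of "I - {i}" I w]]
      by (simp add: inj_on_diff)
  qed
  have "?c * bethe_sum q \<alpha> w I (y # ys)
      = (\<Sum>i\<in>I. first_coeff (of_real q) (phi q \<alpha> y) (w ` I) (w i) * (?c * bethe_sum q \<alpha> w (I - {i}) ys))"
    using bethe_sum_rec[where ys = "y # ys" and \<alpha> = \<alpha>, OF Cons.prems(1) ne Cons.prems(2) nz] q
    by (simp add: head_weight_def sum_distrib_left algebra_simps)
  also have "\<dots> = (\<Sum>i\<in>I. first_coeff (of_real q) (phi q \<alpha> y) (w ` I) (w i) * bethe_list q \<alpha> (w ` I - {w i}) ys)"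
    by (rule sum.cong[OF refl]) (simp only: IH)
  also have "\<dots> = bethe_list q \<alpha> (w ` I) (y # ys)"
    using sum.reindex[OF Cons.prems(2), of "\<lambda>u. first_coeff (of_real q) (phi q \<alpha> y) (w ` I) u * bethe_list q \<alpha> (w ` I - {u}) ys"]
    by simp
  finally show ?case .
qed

lemma bethe_list_too_long: "finite W \<Longrightarrow> card W < length ys \<Longrightarrow> bethe_list q \<alpha> W ys = 0"
proof (induction ys arbitrary: W)
  case Nil
  then show ?case by simp
next
  case (Cons y ys)
  have "bethe_list q \<alpha> (W - {w}) ys = 0" if "w \<in> W" for w
  proof -
    have "card W > 0" using Cons.prems(1) that card_gt_0_iff by blast
    then show ?thesis using Cons.IH[of "W - {w}"] Cons.prems that by (simp add: card_Diff_singleton)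
  qed
  then show ?case by simp
qed

lemma scatt_list_upt:
  "scatt_list Q (map u [a..<b]) = (\<Prod>i\<in>{a..<b}. \<Prod>j\<in>{i<..<b}. scatt Q (u i) (u j))"
proof (induction "b - a" arbitrary: a)
  case 0
  then show ?case by simp
next
  case (Suc k)
  then have ab: "a < b" and e: "[a..<b] = a # [Suc a..<b]" by (simp_all add: upt_conv_Cons)
  have "{a<..<b} = {Suc a..<b}" by auto
  then have "prod_list (map (scatt Q (u a)) (map u [Suc a..<b])) = (\<Prod>j\<in>{a<..<b}. scatt Q (u a) (u j))"
    using prod.distinct_set_conv_list[of "[Suc a..<b]" "\<lambda>j. scatt Q (u a) (u j)"] by (simp add: comp_def)
  then show ?case
    unfolding e using Suc prod.atLeast_Suc_lessThan[OF ab, of "\<lambda>i. \<Prod>j\<in>{i<..<b}. scatt Q (u i) (u j)"]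
    by simp
qed

lemma phi_list_upt:
  "length ys \<le> b - a \<Longrightarrow> phi_list q \<alpha> ys (map u [a..<b]) = (\<Prod>i<length ys. phi q \<alpha> (ys ! i) (u (a + i)))"
proof (induction ys arbitrary: a)
  case Nil
  then show ?case by (cases "[a..<b]") simp_all
next
  case (Cons y ys)
  then have "[a..<b] = a # [Suc a..<b]" by (simp add: upt_conv_Cons)
  then have "phi_list q \<alpha> (y # ys) (map u [a..<b])
      = phi q \<alpha> y (u a) * (\<Prod>i<length ys. phi q \<alpha> (ys ! i) (u (Suc a + i)))"
    using Cons by simp
  also have "\<dots> = (\<Prod>i<length (y # ys). phi q \<alpha> ((y # ys) ! i) (u (a + i)))"
    unfolding length_Cons prod.lessThan_Suc_shift by simp
  finally show ?case .
qed

definition perm_list :: "nat \<Rightarrow> (nat \<Rightarrow> int) \<Rightarrow> (nat \<times> bool) list" where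
  "perm_list N \<sigma> = map (\<lambda>k. (nat \<bar>\<sigma> k\<bar>, \<sigma> k > 0)) [1..<N + 1]"

definition list_perm :: "nat \<Rightarrow> (nat \<times> bool) list \<Rightarrow> nat \<Rightarrow> int" where
  "list_perm N pl k =
     (if k \<in> {1..N} then (if snd (pl ! (k - 1)) then int (fst (pl ! (k - 1))) else - int (fst (pl ! (k - 1))))
      else 0)"

lemma length_perm_list: "length (perm_list N \<sigma>) = N"
  unfolding perm_list_def by simp

lemma perm_list_nth: "i < N \<Longrightarrow> perm_list N \<sigma> ! i = (nat \<bar>\<sigma> (Suc i)\<bar>, \<sigma> (Suc i) > 0)"
  unfolding perm_list_def by (simp add: nth_upt del: upt_Suc)

lemma perm_list_in_signed_lists:
  assumes "\<sigma> \<in> signed_perms N"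
  shows "perm_list N \<sigma> \<in> signed_lists {1..N}"
proof -
  have b: "bij_betw (\<lambda>k. nat \<bar>\<sigma> k\<bar>) {1..N} {1..N}" using assms unfolding signed_perms_def by simp
  have e: "map fst (perm_list N \<sigma>) = map (\<lambda>k. nat \<bar>\<sigma> k\<bar>) [1..<N + 1]" unfolding perm_list_def by simp
  have s: "set [1..<N + 1] = {1..N}" by auto
  have "distinct (map (\<lambda>k. nat \<bar>\<sigma> k\<bar>) [1..<N + 1])"
    using b unfolding bij_betw_def distinct_map s by simp
  moreover have "set (map (\<lambda>k. nat \<bar>\<sigma> k\<bar>) [1..<N + 1]) = {1..N}"
    using b unfolding bij_betw_def by (simp only: set_map s)
  ultimately have "distinct (map fst (perm_list N \<sigma>)) \<and> set (map fst (perm_list N \<sigma>)) = {1..N}"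
    unfolding e by blast
  then show ?thesis unfolding signed_lists_def by blast
qed

lemma signed_lists_bij_betw_fst:
  assumes "pl \<in> signed_lists {1..N}"
  shows "bij_betw (\<lambda>k. fst (pl ! (k - 1))) {1..N} {1..N}"
proof (rule bij_betw_imageI)
  have d: "distinct (map fst pl)" and st: "set (map fst pl) = {1..N}"
    using assms unfolding signed_lists_def by auto
  have len: "length pl = N" using length_signed_lists[OF assms] by simp
  show "inj_on (\<lambda>k. fst (pl ! (k - 1))) {1..N}"
  proof (rule inj_onI)
    fix a b assume ab: "a \<in> {1..N}" "b \<in> {1..N}" "fst (pl ! (a - 1)) = fst (pl ! (b - 1))"
    moreover have "a - 1 < length pl" "b - 1 < length pl" using ab(1,2) len by auto
    ultimately have "map fst pl ! (a - 1) = map fst pl ! (b - 1)" by simp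
    then have "a - 1 = b - 1" using nth_eq_iff_index_eq[OF d] ab(1,2) len by auto
    then show "a = b" using ab by auto
  qed
  show "(\<lambda>k. fst (pl ! (k - 1))) ` {1..N} = {1..N}"
  proof (intro equalityI subsetI)
    fix x assume "x \<in> (\<lambda>k. fst (pl ! (k - 1))) ` {1..N}"
    then obtain k where "k \<in> {1..N}" "x = fst (pl ! (k - 1))" by blast
    moreover have "k - 1 < length pl" using \<open>k \<in> {1..N}\<close> len by auto
    ultimately show "x \<in> {1..N}" using st by (metis length_map nth_map nth_mem)
  next
    fix x assume "x \<in> {1..N}"
    then have "x \<in> set (map fst pl)" using st by simp
    then obtain i where "i < length pl" "fst (pl ! i) = x" by (auto simp: in_set_conv_nth)
    then have "Suc i \<in> {1..N}" "fst (pl ! (Suc i - 1)) = x" using len by auto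
    then show "x \<in> (\<lambda>k. fst (pl ! (k - 1))) ` {1..N}" by (metis image_eqI)
  qed
qed

lemma list_perm_in_signed_perms:
  assumes "pl \<in> signed_lists {1..N}"
  shows "list_perm N pl \<in> signed_perms N"
proof -
  note bij = signed_lists_bij_betw_fst[OF assms]
  have "bij_betw (\<lambda>k. nat \<bar>list_perm N pl k\<bar>) {1..N} {1..N}"
    using bij by (rule bij_betw_cong[THEN iffD1, rotated]) (simp add: list_perm_def)
  moreover have "list_perm N pl k \<noteq> 0" if "k \<in> {1..N}" for k
    using bij_betw_apply[OF bij that] that unfolding list_perm_def by auto
  ultimately show ?thesis unfolding signed_perms_def list_perm_def by auto
qed

lemma list_perm_perm_list:
  assumes "\<sigma> \<in> signed_perms N"
  shows "list_perm N (perm_list N \<sigma>) = \<sigma>"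
proof
  fix k
  show "list_perm N (perm_list N \<sigma>) k = \<sigma> k"
  proof (cases "k \<in> {1..N}")
    case True
    then have "perm_list N \<sigma> ! (k - 1) = (nat \<bar>\<sigma> k\<bar>, \<sigma> k > 0)" using perm_list_nth[of "k - 1" N \<sigma>] by auto
    moreover have "\<sigma> k \<noteq> 0" using assms True unfolding signed_perms_def by auto
    ultimately show ?thesis unfolding list_perm_def using True by auto
  next
    case False
    then show ?thesis using assms unfolding list_perm_def signed_perms_def by auto
  qed
qed

lemma perm_list_list_perm:
  assumes "pl \<in> signed_lists {1..N}"
  shows "perm_list N (list_perm N pl) = pl"
proof (rule nth_equalityI)
  have len: "length pl = N" using length_signed_lists[OF assms] by simp
  then show "length (perm_list N (list_perm N pl)) = length pl" by (simp add: length_perm_list)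
  fix i assume "i < length (perm_list N (list_perm N pl))"
  then have i: "i < N" by (simp add: length_perm_list)
  have st: "set (map fst pl) = {1..N}" using assms unfolding signed_lists_def by auto
  have "fst (pl ! i) \<in> {1..N}" using st i len by (metis nth_map nth_mem length_map)
  then have "list_perm N pl (Suc i) = (if snd (pl ! i) then int (fst (pl ! i)) else - int (fst (pl ! i)))"
    "fst (pl ! i) \<ge> 1"
    unfolding list_perm_def using i by simp_all
  then show "perm_list N (list_perm N pl) ! i = pl ! i" using perm_list_nth[OF i] by (cases "pl ! i") auto
qed

lemma bij_perm_list: "bij_betw (perm_list N) (signed_perms N) (signed_lists {1..N})"
proof (rule bij_betw_byWitness[where f' = "list_perm N"])
  show "\<forall>\<sigma>\<in>signed_perms N. list_perm N (perm_list N \<sigma>) = \<sigma>" using list_perm_perm_list by blast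
  show "\<forall>pl\<in>signed_lists {1..N}. perm_list N (list_perm N pl) = pl" using perm_list_list_perm by blast
  show "perm_list N ` signed_perms N \<subseteq> signed_lists {1..N}" using perm_list_in_signed_lists by blast
  show "list_perm N ` signed_lists {1..N} \<subseteq> signed_perms N" using list_perm_in_signed_perms by blast
qed

lemma map_signed_val_perm_list:
  assumes "\<sigma> \<in> signed_perms N"
  shows "map (signed_val q w) (perm_list N \<sigma>) = map (wsig q w \<sigma>) [1..<N + 1]"
  unfolding perm_list_def map_map
proof (rule map_cong[OF refl])
  fix k assume "k \<in> set [1..<N + 1]"
  then have "\<sigma> k \<noteq> 0" using assms unfolding signed_perms_def by auto
  then show "(signed_val q w \<circ> (\<lambda>k. (nat \<bar>\<sigma> k\<bar>, 0 < \<sigma> k))) k = wsig q w \<sigma> k"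
    unfolding signed_val_def wsig_def qinv_def by auto
qed

lemma Ffun_sum_eq_bethe_sum:
  assumes "length ys \<le> N"
  shows "(\<Sum>\<sigma>\<in>signed_perms N. let u = wsig q w \<sigma> in
         (\<Prod>i\<in>{1..N}. \<Prod>j\<in>{i<..N}.
            (u i - of_real q * u j) / (u i - u j) * ((1 - u i * u j) / (1 - of_real q * u i * u j)))
         * (\<Prod>i\<in>{1..length ys}. phi q \<alpha> (ys ! (i - 1)) (u i)))
       = bethe_sum q \<alpha> w {1..N} ys"
proof -
  have summand: "(let u = wsig q w \<sigma> in
         (\<Prod>i\<in>{1..N}. \<Prod>j\<in>{i<..N}.
            (u i - of_real q * u j) / (u i - u j) * ((1 - u i * u j) / (1 - of_real q * u i * u j)))
         * (\<Prod>i\<in>{1..length ys}. phi q \<alpha> (ys ! (i - 1)) (u i)))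
      = scatt_list (of_real q) (map (signed_val q w) (perm_list N \<sigma>))
        * phi_list q \<alpha> ys (map (signed_val q w) (perm_list N \<sigma>))"
    if \<sigma>: "\<sigma> \<in> signed_perms N" for \<sigma>
  proof -
    define u where "u = wsig q w \<sigma>"
    have "{1..<N + 1} = {1..N}" "\<And>i. {i<..<N + 1} = {i<..N}" by auto
    then have "scatt_list (of_real q) (map u [1..<N + 1]) = (\<Prod>i\<in>{1..N}. \<Prod>j\<in>{i<..N}.
        (u i - of_real q * u j) / (u i - u j) * ((1 - u i * u j) / (1 - of_real q * u i * u j)))"
      unfolding scatt_list_upt scatt_def by simp
    moreover have "phi_list q \<alpha> ys (map u [1..<N + 1]) = (\<Prod>i\<in>{1..length ys}. phi q \<alpha> (ys ! (i - 1)) (u i))"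
      using phi_list_upt[of ys "N + 1" 1 q \<alpha> u] assms
      by (simp add: prod.atLeast1_atMost_eq del: upt_Suc)
    ultimately show ?thesis unfolding map_signed_val_perm_list[OF \<sigma>] u_def[symmetric] Let_def by simp
  qed
  show ?thesis
    unfolding bethe_sum_def sum.reindex_bij_betw[OF bij_perm_list, symmetric]
    by (rule sum.cong[OF refl]) (rule summand)
qed

lemma generic_imp_generic_set:
  assumes "generic q N w" "q > 0" "q \<noteq> 1"
  shows "inj_on w {1..N}" "generic_set (of_real q) (w ` {1..N})"
proof -
  have pt: "\<forall>i\<in>{1..N}. w i \<noteq> 0"
    "\<forall>i\<in>{1..N}. \<forall>a\<in>{w i, qinv (of_real q) (w i)}. a \<noteq> 1 \<and> of_real q * a \<noteq> 1 \<and> of_real q * a ^ 2 \<noteq> 1"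
    and pair: "\<forall>i\<in>{1..N}. \<forall>j\<in>{1..N}. i \<noteq> j \<longrightarrow>
        (\<forall>a\<in>{w i, qinv (of_real q) (w i)}. \<forall>b\<in>{w j, qinv (of_real q) (w j)}. a \<noteq> b \<and> of_real q * a * b \<noteq> 1)"
    using assms(1) unfolding generic_def qinv_def by blast+
  show inj: "inj_on w {1..N}"
    by (rule inj_onI) (use pair in blast)
  show "generic_set (of_real q) (w ` {1..N})"
    unfolding generic_set_def using assms(2,3) pt pair by auto
qed

lemma Ffun_eq_bethe:
  assumes q: "q > 0" "q \<noteq> 1" and gen: "generic q N w" and y: "is_config y"
  shows "Ffun q \<alpha> N y w = bethe q \<alpha> (w ` {1..N}) y"
proof -
  note inj = generic_imp_generic_set(1)[OF gen q] and gen' = generic_imp_generic_set(2)[OF gen q]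
  have fin: "finite y" using y unfolding is_config_def by simp
  have len: "length (parts y) = card y" unfolding parts_def using fin by simp
  have card: "card (w ` {1..N}) = N" using card_image[OF inj] by simp
  show ?thesis
  proof (cases "card y > N")
    case True
    then show ?thesis
      unfolding Ffun_def bethe_def using bethe_list_too_long[of "w ` {1..N}" "parts y"] len card by simp
  next
    case False
    have "(\<Sum>\<sigma>\<in>signed_perms N. let u = wsig q w \<sigma> in
         (\<Prod>i\<in>{1..N}. \<Prod>j\<in>{i<..N}.
            (u i - of_real q * u j) / (u i - u j) * ((1 - u i * u j) / (1 - of_real q * u i * u j)))
         * (\<Prod>i\<in>{1..card y}. phi q \<alpha> (parts y ! (i - 1)) (u i)))
       = bethe_sum q \<alpha> w {1..N} (parts y)"
      using Ffun_sum_eq_bethe_sum[of "parts y" N q w \<alpha>] len False by simp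
    then have "Ffun q \<alpha> N y w = of_real (Vconst q (N - card y) * \<alpha> ^ (N - card y)) * bethe_sum q \<alpha> w {1..N} (parts y)"
      unfolding Ffun_def Let_def if_not_P[OF False] by simp
    also have "\<dots> = bethe q \<alpha> (w ` {1..N}) y"
      unfolding bethe_def using bethe_list_eq_bethe_sum[OF q(1) _ inj gen', of "parts y" \<alpha>] len False by simp
    finally show ?thesis .
  qed
qed

theorem lemma2p3:
  fixes q \<alpha> :: real and N :: nat and y :: "nat set" and w :: "nat \<Rightarrow> complex"
  assumes "q > 0" and "q \<noteq> 1" and "\<alpha> \<ge> 0"
    and "is_config y" and "card y \<le> N"
    and "generic q N w"
  shows "(\<Sum>y'\<in>{y'. is_config y' \<and> gen q \<alpha> y y' \<noteq> 0}. of_real (gen q \<alpha> y y') * Ffun q \<alpha> N y' w)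
       = (- of_real \<alpha> + (\<Sum>i=1..N. (1 - of_real q) ^ 2 * w i / ((1 - w i) * (1 - of_real q * w i))))
         * Ffun q \<alpha> N y w"
proof -
  let ?W = "w ` {1..N}"
  note inj = generic_imp_generic_set(1)[OF assms(6,1,2)]
    and gen' = generic_imp_generic_set(2)[OF assms(6,1,2)]
    and F = Ffun_eq_bethe[OF assms(1,2,6)]
  have "(\<Sum>y'\<in>{y'. is_config y' \<and> gen q \<alpha> y y' \<noteq> 0}. of_real (gen q \<alpha> y y') * Ffun q \<alpha> N y' w)
      = (\<Sum>y'\<in>{y'. is_config y' \<and> gen q \<alpha> y y' \<noteq> 0}. of_real (gen q \<alpha> y y') * bethe q \<alpha> ?W y')"
    by (rule sum.cong) (simp_all add: F)
  also have "\<dots> = gen_action (of_real q) (of_real \<alpha>) (bethe q \<alpha> ?W) y"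
    by (rule generator_sum_eq_gen_action[OF assms(4)])
  also have "\<dots> = ((\<Sum>u\<in>?W. energy (of_real q) u) - of_real \<alpha>) * bethe q \<alpha> ?W y"
    using bethe_eigenfunction[OF gen'] assms(4) unfolding is_config_def by blast
  also have "(\<Sum>u\<in>?W. energy (of_real q) u) = (\<Sum>i=1..N. (1 - of_real q) ^ 2 * w i / ((1 - w i) * (1 - of_real q * w i)))"
    unfolding sum.reindex[OF inj] energy_def by simp
  finally show ?thesis using F[OF assms(4)] by simp
qed

end
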